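(* Let $\Omega\subset\mathbb{R}^2$ have properties (i), $( * )$, $( ** )$. Let $t\mapsto(x,y)(t)\in\mathbb{R}_+\Omega$ be an absolutely continuous curve that never passes through the origin, and write $(x,y)(t)=R(t)(\cosh_\Omega\theta(t),\sinh_\Omega\theta(t))$ with $R(t)\ge0$. Then $R(t)$ and $\theta(t)$ are absolutely continuous. If, at the value $\theta=\theta(t)$, the functions $\cosh_\Omega,\sinh_\Omega$ are differentiable, i.e. $\theta^\diamond=\{\eta\}$ is a singleton, then $$\dot R=\dot x\cosh_{\Omega^\diamond}\eta-\dot y\sinh_{\Omega^\diamond}\eta,\qquad \dot\theta=\frac{\dot y\cosh_\Omega\theta-\dot x\sinh_\Omega\theta}{R}.$$
   Context: Points of $\mathbb{R}^2$: $(x,y)$; of $\mathbb{R}^{2*}$: $(p,q)$; $\mathbb{R}_+\Omega=\{\lambda\omega:\lambda\ge0,\omega\in\Omega\}$. Property (i): $\Omega$ nonempty, convex, closed, $0\notin\Omega$, $\lambda\Omega\subset\Omega$ for $\lambda>1$. $( * )$: $\lambda\Omega\cap\partial\Omega=\varnothing$ for all $\lambda>1$. $( ** )$: the boundary rays $l_0,l_1$ of $C=\operatorname{cl}(\mathbb{R}_+\Omega)$ satisfy $\operatorname{dist}(l_k,\Omega)=0$. Antipolar: $\Omega^\diamond=\{(p,q):px-qy\ge1\ \forall (x,y)\in\Omega\}$. Hyperbolic convex trigonometric functions: fix $\omega_0=(x_0,y_0)\in\partial\Omega$, $\omega_0^\diamond=(p_0,q_0)\in\partial\Omega^\diamond$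 with $p_0x_0-q_0y_0=1$; for $\omega=(x,y)\in\partial\Omega$, $\theta$ is twice the signed (counterclockwise positive) area of the region bounded by the segment $O\omega_0$, the arc of $\partial\Omega$ from $\omega_0$ to $\omega$ and the segment $\omega O$, and $(\cosh_\Omega\theta,\sinh_\Omega\theta)=(x,y)$; $\cosh_{\Omega^\diamond},\sinh_{\Omega^\diamond}$ are defined likewise from $\Omega^\diamond$, $\omega_0^\diamond$. $\theta^\diamond$ is the set of $\eta$ with $\cosh_\Omega\theta\cosh_{\Omega^\diamond}\eta-\sinh_\Omega\theta\sinh_{\Omega^\diamond}\eta=1$. *)

theory Defs
  imports "HOL-Analysis.Analysis"
begin

definition pos_cone :: "(real \<times> real) set \<Rightarrow> (real \<times> real) set" where
  "pos_cone \<Omega> = {c *\<^sub>R w | c w. c \<ge> 0 \<and> w \<in> \<Omega>}"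

definition prop_i :: "(real \<times> real) set \<Rightarrow> bool" where
  "prop_i \<Omega> \<longleftrightarrow> \<Omega> \<noteq> {} \<and> convex \<Omega> \<and> closed \<Omega> \<and> (0::real\<times>real) \<notin> \<Omega> \<and>
     (\<forall>c::real. c > 1 \<longrightarrow> (\<lambda>x. c *\<^sub>R x) ` \<Omega> \<subseteq> \<Omega>)"

definition prop_star :: "(real \<times> real) set \<Rightarrow> bool" where
  "prop_star \<Omega> \<longleftrightarrow> (\<forall>c::real. c > 1 \<longrightarrow> ((\<lambda>x. c *\<^sub>R x) ` \<Omega>) \<inter> frontier \<Omega> = {})"

definition ray :: "real \<times> real \<Rightarrow> (real \<times> real) set" where
  "ray v = {t *\<^sub>R v | t. t \<ge> 0}"

definition boundary_ray :: "(real \<times> real) set \<Rightarrow> (real \<times> real) set \<Rightarrow> bool" where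
  "boundary_ray C l \<longleftrightarrow> (\<exists>v. v \<noteq> 0 \<and> l = ray v \<and> l \<subseteq> frontier C)"

definition prop_starstar :: "(real \<times> real) set \<Rightarrow> bool" where
  "prop_starstar \<Omega> \<longleftrightarrow>
     (\<forall>l. boundary_ray (closure (pos_cone \<Omega>)) l \<longrightarrow> setdist l \<Omega> = 0)"

definition antipolar :: "(real \<times> real) set \<Rightarrow> (real \<times> real) set" where
  "antipolar \<Omega> = {(p, q). \<forall>(x, y) \<in> \<Omega>. p * x - q * y \<ge> 1}"

text \<open>The region bounded by the segment O w0, the arc of the boundary of Omega from w0 to w,
  and the segment w O.\<close>
definition sector :: "(real \<times> real) set \<Rightarrow> real \<times> real \<Rightarrow> real \<times> real \<Rightarrow> (real \<times> real) set" where
  "sector \<Omega> w0 w = {s *\<^sub>R u | s u. 0 \<le> s \<and> s \<le> 1 \<and> u \<in> frontier \<Omega> \<and>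
       (\<exists>\<alpha> \<beta>. \<alpha> \<ge> 0 \<and> \<beta> \<ge> 0 \<and> u = \<alpha> *\<^sub>R w0 + \<beta> *\<^sub>R w)}"

text \<open>Hyperbolic angle theta of a boundary point w: twice the signed area (counterclockwise
  positive) of the sector from w0 to w.\<close>
definition hang :: "(real \<times> real) set \<Rightarrow> real \<times> real \<Rightarrow> real \<times> real \<Rightarrow> real" where
  "hang \<Omega> w0 w = sgn (fst w0 * snd w - snd w0 * fst w) * 2 * measure lebesgue (sector \<Omega> w0 w)"

definition hpoint :: "(real \<times> real) set \<Rightarrow> real \<times> real \<Rightarrow> real \<Rightarrow> real \<times> real" where
  "hpoint \<Omega> w0 \<theta> = (THE w. w \<in> frontier \<Omega> \<and> hang \<Omega> w0 w = \<theta>)"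

definition hcosh :: "(real \<times> real) set \<Rightarrow> real \<times> real \<Rightarrow> real \<Rightarrow> real" where
  "hcosh \<Omega> w0 \<theta> = fst (hpoint \<Omega> w0 \<theta>)"

definition hsinh :: "(real \<times> real) set \<Rightarrow> real \<times> real \<Rightarrow> real \<Rightarrow> real" where
  "hsinh \<Omega> w0 \<theta> = snd (hpoint \<Omega> w0 \<theta>)"

definition hdom :: "(real \<times> real) set \<Rightarrow> real \<times> real \<Rightarrow> real set" where
  "hdom \<Omega> w0 = hang \<Omega> w0 ` frontier \<Omega>"

definition hdual :: "(real \<times> real) set \<Rightarrow> real \<times> real \<Rightarrow> real \<times> real \<Rightarrow> real \<Rightarrow> real set" where
  "hdual \<Omega> w0 w0d \<theta> = {\<eta> \<in> hdom (antipolar \<Omega>) w0d.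
      hcosh \<Omega> w0 \<theta> * hcosh (antipolar \<Omega>) w0d \<eta> - hsinh \<Omega> w0 \<theta> * hsinh (antipolar \<Omega>) w0d \<eta> = 1}"

definition abs_cont_on :: "real \<Rightarrow> real \<Rightarrow> (real \<Rightarrow> 'a::real_normed_vector) \<Rightarrow> bool" where
  "abs_cont_on a b f \<longleftrightarrow> (\<forall>\<epsilon>>0. \<exists>\<delta>>0. \<forall>(n::nat) (u::nat \<Rightarrow> real) v.
      (\<forall>i<n. a \<le> u i \<and> u i \<le> v i \<and> v i \<le> b) \<and>
      (\<forall>i<n. \<forall>j<n. i \<noteq> j \<longrightarrow> v i \<le> u j \<or> v j \<le> u i) \<and>
      (\<Sum>i<n. v i - u i) < \<delta> \<longrightarrow> (\<Sum>i<n. norm (f (v i) - f (u i))) < \<epsilon>)"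

end

(* Fix a linear functional h with h >= 1 on Omega.  Its slope rot90 h . p / h . p orders the
   rays of the cone, so sectors of Omega between two boundary points u, v are sandwiched between
   triangles: twice their area lies between |det2 u v| / l(v) and |det2 u v|, where l is any
   functional of the antipolar supporting Omega at u.  Hence the hyperbolic angle is injective on
   the boundary, and theta s - theta t = det2 (w t) (w s) (1 + o(1)) for the boundary points w of
   the curve; since det2 (w t) (w s) = det2 (z t) (z s - z t) / (R t R s), this gives theta-dot.
   The radius is R t = min { <g, z t> | g in the antipolar }, attained exactly at the functionals
   supporting Omega at w t.  These are uniformly bounded along the curve, which makes R Lipschitz
   in z, and they converge to the unique one when theta-diamond is a singleton, which gives
   R-dot = <g_eta, z-dot>.  Property (**) is what makes the antipolar satisfy prop_star, so that
   its hyperbolic angle, and thus eta, is well defined. *)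

theory Submission
  imports Defs
begin

section \<open>Planar determinant and areas of triangles\<close>

definition det2 :: "real \<times> real \<Rightarrow> real \<times> real \<Rightarrow> real" where
  "det2 u v = fst u * snd v - snd u * fst v"

definition rot90 :: "real \<times> real \<Rightarrow> real \<times> real" where
  "rot90 h = (- snd h, fst h)"

lemma inner_real_pair: "(u::real \<times> real) \<bullet> v = fst u * fst v + snd u * snd v"
  by (cases u, cases v) simp

lemma det2_self [simp]: "det2 u u = 0"
  by (simp add: det2_def)

lemma det2_commute: "det2 v u = - det2 u v"
  by (simp add: det2_def)

lemma det2_scaleR_left [simp]: "det2 (c *\<^sub>R u) v = c * det2 u v"
  and det2_scaleR_right [simp]: "det2 u (c *\<^sub>R v) = c * det2 u v"
  and det2_diff_right: "det2 u (v - w) = det2 u v - det2 u w"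
  by (simp_all add: det2_def algebra_simps)

lemma det2_eq_rot90_inner: "det2 u v = rot90 u \<bullet> v"
  by (simp add: det2_def rot90_def inner_real_pair)

lemma norm_rot90 [simp]: "norm (rot90 u) = norm u"
  by (simp add: rot90_def norm_prod_def add.commute)

lemma abs_det2_le: "\<bar>det2 u v\<bar> \<le> norm u * norm v"
  using Cauchy_Schwarz_ineq2[of "rot90 u" v] by (simp add: det2_eq_rot90_inner)

lemma det2_inner_identity: "(h \<bullet> h) * det2 p q = (h \<bullet> p) * (rot90 h \<bullet> q) - (rot90 h \<bullet> p) * (h \<bullet> q)"
  by (simp add: det2_def rot90_def inner_real_pair algebra_simps)

lemma det2_cramer: "det2 u v *\<^sub>R f = det2 f v *\<^sub>R u + det2 u f *\<^sub>R v"
  by (simp add: det2_def prod_eq_iff algebra_simps)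

lemma eq_0_if_inner_det2_eq_0:
  assumes "h \<bullet> w = 0" "det2 p w = 0" "h \<bullet> p \<noteq> 0"
  shows "w = 0"
proof -
  have "fst w * (h \<bullet> p) = fst p * (h \<bullet> w) - snd h * det2 p w"
    and "snd w * (h \<bullet> p) = snd p * (h \<bullet> w) + fst h * det2 p w"
    by (simp_all add: det2_def inner_real_pair algebra_simps)
  with assms show ?thesis by (simp add: prod_eq_iff)
qed

text \<open>The library computes areas of triangles only in \<open>real^2\<close>; Lebesgue measure on
  \<open>real \<times> real\<close> is transported along the coordinate isomorphism.\<close>

definition pair_of_vec :: "real^2 \<Rightarrow> real \<times> real" where
  "pair_of_vec v = (v$1, v$2)"

definition vec_of_pair :: "real \<times> real \<Rightarrow> real^2" where
  "vec_of_pair p = vector [fst p, snd p]"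

lemma pair_of_vec_of_pair [simp]: "pair_of_vec (vec_of_pair p) = p"
  by (simp add: pair_of_vec_def vec_of_pair_def)

lemma vec_of_pair_of_vec [simp]: "vec_of_pair (pair_of_vec v) = v"
  by (simp add: pair_of_vec_def vec_of_pair_def vec_eq_iff forall_2)

lemma linear_pair_of_vec: "linear pair_of_vec"
  by (rule linearI) (auto simp: pair_of_vec_def)

lemma linear_vec_of_pair: "linear vec_of_pair"
  by (rule linearI) (auto simp: vec_of_pair_def vec_eq_iff forall_2)

lemma pair_of_vec_measurable: "pair_of_vec \<in> borel_measurable lborel"
  using linear_pair_of_vec by (simp add: linear_continuous_on borel_measurable_continuous_onI linear_linear)

lemma distr_pair_of_vec_lborel: "distr lborel borel pair_of_vec = lborel"
proof (rule lborel_eqI[symmetric])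
  fix l u :: "real \<times> real"
  assume le: "\<And>b. b \<in> Basis \<Longrightarrow> l \<bullet> b \<le> u \<bullet> b"
  obtain l1 l2 u1 u2 where lu: "l = (l1, l2)" "u = (u1, u2)" by (cases l, cases u) auto
  have Basis: "(Basis :: (real^2) set) = {axis 1 1, axis 2 1}"
    by (auto simp: Basis_vec_def UNIV_2)
  have "pair_of_vec -` box l u = box (vec_of_pair l) (vec_of_pair u)"
    by (auto simp: lu box_def Basis Basis_prod_def pair_of_vec_def vec_of_pair_def inner_axis
        cart_eq_inner_axis[symmetric])
  moreover have "l1 \<le> u1" "l2 \<le> u2"
    using le[of "(1,0)"] le[of "(0,1)"] by (auto simp: lu Basis_prod_def)
  ultimately have "emeasure lborel (pair_of_vec -` box l u) = ennreal ((u1 - l1) * (u2 - l2))"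
    by (simp add: emeasure_lborel_box_eq Basis vec_of_pair_def inner_axis axis_eq_axis lu)
  then show "emeasure (distr lborel borel pair_of_vec) (box l u) = (\<Prod>b\<in>Basis. (u - l) \<bullet> b)"
    using pair_of_vec_measurable by (simp add: emeasure_distr Basis_prod_def lu mult.commute)
qed simp

lemma measure_triangle: "measure lebesgue (convex hull {0, u, v}) = \<bar>det2 u v\<bar> / 2"
proof -
  let ?T = "convex hull {0, u, v}"
  have T: "?T \<in> sets lborel"
    by (simp add: borel_compact finite_imp_compact_convex_hull)
  have "pair_of_vec -` ?T = vec_of_pair ` ?T"
    by (auto simp: image_iff) (metis vec_of_pair_of_vec)
  also have "\<dots> = convex hull {0, vec_of_pair u, vec_of_pair v}"
    using convex_hull_linear_image[OF linear_vec_of_pair] linear_0[OF linear_vec_of_pair] by simp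
  finally have pre: "pair_of_vec -` ?T = convex hull {0, vec_of_pair u, vec_of_pair v}" .
  have "measure lebesgue ?T = measure (distr lborel borel pair_of_vec) ?T"
    using T by (simp add: distr_pair_of_vec_lborel)
  also have "\<dots> = measure lborel (convex hull {0, vec_of_pair u, vec_of_pair v})"
    using T pair_of_vec_measurable pre by (simp add: measure_distr)
  also have "\<dots> = \<bar>det2 u v\<bar> / 2"
    by (subst content_triangle) (simp add: vec_of_pair_def det2_def abs_minus_commute mult.commute)
  finally show ?thesis .
qed

section \<open>The hyperbolic angle of a domain\<close>

lemma prop_i_separating_functional:
  assumes "prop_i S"
  shows "\<exists>h. \<forall>x\<in>S. h \<bullet> x \<ge> 1"
proof -
  have "convex S" "closed S" "(0::real\<times>real) \<notin> S" using assms by (auto simp: prop_i_def)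
  then obtain a b where "a \<bullet> (0::real\<times>real) < b" "\<forall>x\<in>S. a \<bullet> x > b"
    using separating_hyperplane_closed_point by blast
  then have "\<forall>x\<in>S. (1 / b) *\<^sub>R a \<bullet> x \<ge> 1"
    by (auto simp: field_simps less_imp_le)
  then show ?thesis by blast
qed

locale hyperbolic_domain =
  fixes S :: "(real \<times> real) set" and w0 :: "real \<times> real"
  assumes S_prop_i: "prop_i S" and S_prop_star: "prop_star S" and w0_frontier: "w0 \<in> frontier S"
begin

lemma S_closed: "closed S" and S_convex: "convex S" and zero_notin_S: "(0::real\<times>real) \<notin> S"
  using S_prop_i by (auto simp: prop_i_def)

lemma frontier_subset_S: "frontier S \<subseteq> S"
  using S_closed by (simp add: frontier_subset_closed)

lemma scaleR_notin_frontier: "x \<in> S \<Longrightarrow> c > 1 \<Longrightarrow> c *\<^sub>R x \<notin> frontier S"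
  using S_prop_star by (auto simp: prop_star_def)

lemma frontier_radial_unique:
  assumes u: "u \<in> frontier S" and cu: "c *\<^sub>R u \<in> frontier S" and c: "c > 0"
  shows "c = 1"
proof (rule ccontr)
  assume "c \<noteq> 1"
  then consider "c > 1" | "1 / c > 1" using c by (fastforce simp: field_simps)
  then show False
  proof cases
    case 1
    then show False using scaleR_notin_frontier[of u c] u cu frontier_subset_S by blast
  next
    case 2
    then show False using scaleR_notin_frontier[of "c *\<^sub>R u" "1/c"] u cu c frontier_subset_S by auto
  qed
qed

lemma frontier_conic_comb_le_1:
  assumes u: "u \<in> frontier S" and v: "v \<in> frontier S" and f: "f \<in> frontier S"
    and a: "a \<ge> 0" and b: "b \<ge> 0" and f_eq: "f = a *\<^sub>R u + b *\<^sub>R v"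
  shows "a + b \<le> 1"
proof (rule ccontr)
  assume "\<not> a + b \<le> 1"
  then have ab: "a + b > 1" by simp
  define p where "p = (a / (a + b)) *\<^sub>R u + (b / (a + b)) *\<^sub>R v"
  have "p \<in> S"
    unfolding p_def using convexD[OF S_convex, of u v "a / (a + b)" "b / (a + b)"] u v frontier_subset_S a b ab
    by (auto simp: add_divide_distrib[symmetric])
  moreover have "(a + b) *\<^sub>R p = f" using ab by (simp add: p_def f_eq scaleR_add_right)
  ultimately show False using scaleR_notin_frontier[of p "a + b"] ab f by simp
qed

lemma frontier_point_on_ray:
  assumes "p \<in> S"
  obtains r where "0 < r" "r *\<^sub>R p \<in> frontier S"
proof -
  have "closed_segment 0 p \<inter> S \<noteq> {}" "closed_segment 0 p - S \<noteq> {}"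
    using assms zero_notin_S by auto
  then obtain q where q: "q \<in> closed_segment 0 p" "q \<in> frontier S"
    using connected_Int_frontier[OF connected_segment] by blast
  then obtain r where r: "0 \<le> r" "r \<le> 1" "q = r *\<^sub>R p" by (auto simp: in_segment)
  have "r \<noteq> 0" using q r zero_notin_S frontier_subset_S by auto
  with r q show ?thesis by (intro that) auto
qed

text \<open>Any functional that is \<open>\<ge> 1\<close> on \<open>S\<close> will do: \<open>slope p\<close> is the coordinate
  of the ray through \<open>p\<close> along the line \<open>h \<bullet> p = 1\<close>, and only the order of slopes matters.\<close>

definition h :: "real \<times> real" where
  "h = (SOME h. \<forall>x\<in>S. h \<bullet> x \<ge> 1)"

lemma h_ge_1: "x \<in> S \<Longrightarrow> h \<bullet> x \<ge> 1"
  using someI_ex[OF prop_i_separating_functional[OF S_prop_i]] by (auto simp: h_def)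

lemma h_pos: "x \<in> frontier S \<Longrightarrow> h \<bullet> x > 0"
  using h_ge_1 frontier_subset_S by fastforce

lemma h_inner_self_pos: "h \<bullet> h > 0"
  using h_pos w0_frontier by fastforce

definition slope :: "real \<times> real \<Rightarrow> real" where
  "slope p = (rot90 h \<bullet> p) / (h \<bullet> p)"

lemma slope_scaleR: "c > 0 \<Longrightarrow> slope (c *\<^sub>R p) = slope p"
  by (simp add: slope_def)

lemma continuous_on_slope: "continuous_on (frontier S) slope"
  unfolding slope_def by (intro continuous_intros) (use h_pos in force)

lemma det2_eq_slope_diff:
  assumes "h \<bullet> p > 0" "h \<bullet> q > 0"
  shows "det2 p q = (h \<bullet> p) * (h \<bullet> q) / (h \<bullet> h) * (slope q - slope p)"
proof -
  have "(h \<bullet> h) * det2 p q = (h \<bullet> p) * (h \<bullet> q) * (slope q - slope p)"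
    unfolding det2_inner_identity using assms by (simp add: slope_def algebra_simps)
  then show ?thesis using h_inner_self_pos by (simp add: field_simps)
qed

lemma sgn_det2_eq_sgn_slope_diff:
  assumes "h \<bullet> p > 0" "h \<bullet> q > 0"
  shows "sgn (det2 p q) = sgn (slope q - slope p)"
  using assms h_inner_self_pos by (simp add: det2_eq_slope_diff sgn_mult)

lemma det2_pos_iff:
  assumes "h \<bullet> p > 0" "h \<bullet> q > 0"
  shows "det2 p q > 0 \<longleftrightarrow> slope p < slope q" and "det2 p q = 0 \<longleftrightarrow> slope p = slope q"
    and "det2 p q < 0 \<longleftrightarrow> slope q < slope p"
  using sgn_det2_eq_sgn_slope_diff[OF assms] by (auto simp: sgn_if split: if_splits)

lemma parallel_if_slope_eq:
  assumes p: "h \<bullet> p > 0" and q: "h \<bullet> q > 0" and eq: "slope p = slope q"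
  shows "q = ((h \<bullet> q) / (h \<bullet> p)) *\<^sub>R p"
proof -
  define w where "w = q - ((h \<bullet> q) / (h \<bullet> p)) *\<^sub>R p"
  have "h \<bullet> w = 0" using p by (simp add: w_def inner_diff_right)
  moreover have "det2 p w = 0" using det2_pos_iff(2)[OF p q] eq by (simp add: w_def det2_diff_right)
  ultimately have "w = 0" using eq_0_if_inner_det2_eq_0[of h w p] p by simp
  then show ?thesis by (simp add: w_def)
qed

lemma slope_mediant:
  assumes u: "h \<bullet> u > 0" and v: "h \<bullet> v > 0" and le: "slope u \<le> slope v"
    and a: "a \<ge> 0" and b: "b \<ge> 0" and ab: "a + b > 0"
  shows "h \<bullet> (a *\<^sub>R u + b *\<^sub>R v) > 0" "slope u \<le> slope (a *\<^sub>R u + b *\<^sub>R v)"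
    "slope (a *\<^sub>R u + b *\<^sub>R v) \<le> slope v"
proof -
  have H: "h \<bullet> (a *\<^sub>R u + b *\<^sub>R v) = a * (h \<bullet> u) + b * (h \<bullet> v)" by (simp add: inner_add_right)
  have K: "rot90 h \<bullet> (a *\<^sub>R u + b *\<^sub>R v) = a * (slope u * (h \<bullet> u)) + b * (slope v * (h \<bullet> v))"
    using u v by (simp add: inner_add_right slope_def)
  have pos: "a * (h \<bullet> u) + b * (h \<bullet> v) > 0"
    using u v a b ab by (cases "a > 0") (auto simp: add_pos_nonneg add_nonneg_pos)
  show "h \<bullet> (a *\<^sub>R u + b *\<^sub>R v) > 0" using H pos by simp
  have "slope u * (a * (h \<bullet> u) + b * (h \<bullet> v)) \<le> a * (slope u * (h \<bullet> u)) + b * (slope v * (h \<bullet> v))"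
    using le b v by (simp add: algebra_simps mult_left_mono mult_right_mono)
  then show "slope u \<le> slope (a *\<^sub>R u + b *\<^sub>R v)"
    unfolding slope_def H K using pos by (simp add: pos_le_divide_eq)
  have "a * (slope u * (h \<bullet> u)) + b * (slope v * (h \<bullet> v)) \<le> slope v * (a * (h \<bullet> u) + b * (h \<bullet> v))"
    using le a u by (simp add: algebra_simps mult_left_mono mult_right_mono)
  then show "slope (a *\<^sub>R u + b *\<^sub>R v) \<le> slope v"
    unfolding slope_def H K using pos by (simp add: pos_divide_le_eq)
qed

lemma slope_between_if_conic_comb:
  assumes u: "h \<bullet> u > 0" and v: "h \<bullet> v > 0" and f: "h \<bullet> f > 0"
    and a: "a \<ge> 0" and b: "b \<ge> 0" and f_eq: "f = a *\<^sub>R u + b *\<^sub>R v"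
  shows "min (slope u) (slope v) \<le> slope f \<and> slope f \<le> max (slope u) (slope v)"
proof -
  have ab: "a + b > 0"
    using a b f f_eq by (cases "a = 0 \<and> b = 0") auto
  show ?thesis
  proof (cases "slope u \<le> slope v")
    case True
    then show ?thesis using slope_mediant[OF u v True a b ab] f_eq by simp
  next
    case False
    then have "slope v \<le> slope u" by simp
    from slope_mediant[OF v u this b a] ab f_eq False show ?thesis by (simp add: add.commute)
  qed
qed

lemma conic_comb_if_slope_between:
  assumes u: "h \<bullet> u > 0" and v: "h \<bullet> v > 0" and f: "h \<bullet> f > 0"
    and between: "min (slope u) (slope v) \<le> slope f" "slope f \<le> max (slope u) (slope v)"
  shows "\<exists>a b. a \<ge> 0 \<and> b \<ge> 0 \<and> f = a *\<^sub>R u + b *\<^sub>R v"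
proof (cases "slope u = slope v")
  case True
  then have "f = ((h \<bullet> f) / (h \<bullet> u)) *\<^sub>R u"
    using parallel_if_slope_eq[OF u f] between by simp
  moreover have "(h \<bullet> f) / (h \<bullet> u) \<ge> 0" using u f by simp
  ultimately show ?thesis by (intro exI[of _ "(h \<bullet> f) / (h \<bullet> u)"] exI[of _ 0]) simp
next
  case False
  have "det2 u v \<noteq> 0" using det2_pos_iff(2)[OF u v] False by simp
  then have f_eq: "f = (det2 f v / det2 u v) *\<^sub>R u + (det2 u f / det2 u v) *\<^sub>R v"
    using arg_cong[OF det2_cramer[of u v f], of "\<lambda>p. (1 / det2 u v) *\<^sub>R p"]
    by (simp add: scaleR_add_right divide_inverse mult.commute)
  \<comment> \<open>the three determinants share the sign of \<open>slope v - slope u\<close>\<close>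
  have "det2 f v / det2 u v \<ge> 0 \<and> det2 u f / det2 u v \<ge> 0"
    using det2_pos_iff[OF u v] det2_pos_iff[OF f v] det2_pos_iff[OF u f] False between
    by (cases "slope u < slope v") (auto simp: zero_le_divide_iff min_def max_def split: if_splits)
  then show ?thesis using f_eq by blast
qed

definition slope_sector :: "real \<Rightarrow> real \<Rightarrow> (real \<times> real) set" where
  "slope_sector \<alpha> \<beta> = {s *\<^sub>R u | s u. 0 \<le> s \<and> s \<le> 1 \<and> u \<in> frontier S \<and> \<alpha> \<le> slope u \<and> slope u \<le> \<beta>}"

lemma slope_sectorI:
  "0 \<le> s \<Longrightarrow> s \<le> 1 \<Longrightarrow> f \<in> frontier S \<Longrightarrow> \<alpha> \<le> slope f \<Longrightarrow> slope f \<le> \<beta> \<Longrightarrow> s *\<^sub>R f \<in> slope_sector \<alpha> \<beta>"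
  unfolding slope_sector_def by blast

lemma slope_sectorE:
  assumes "x \<in> slope_sector \<alpha> \<beta>"
  obtains s f where "x = s *\<^sub>R f" "0 \<le> s" "s \<le> 1" "f \<in> frontier S" "\<alpha> \<le> slope f" "slope f \<le> \<beta>"
  using assms unfolding slope_sector_def by blast

lemma sector_eq_slope_sector:
  assumes w: "w \<in> frontier S"
  shows "sector S w0 w = slope_sector (min (slope w0) (slope w)) (max (slope w0) (slope w))"
proof -
  have "(\<exists>\<alpha> \<beta>. \<alpha> \<ge> 0 \<and> \<beta> \<ge> 0 \<and> u = \<alpha> *\<^sub>R w0 + \<beta> *\<^sub>R w) \<longleftrightarrow>
        min (slope w0) (slope w) \<le> slope u \<and> slope u \<le> max (slope w0) (slope w)"
    if "u \<in> frontier S" for u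
    using slope_between_if_conic_comb conic_comb_if_slope_between h_pos[OF w0_frontier] h_pos[OF w]
      h_pos[OF that] by metis
  then show ?thesis unfolding sector_def slope_sector_def by blast
qed

lemma slope_sector_subset_triangle:
  assumes u: "u \<in> frontier S" and v: "v \<in> frontier S" and le: "slope u \<le> slope v"
  shows "slope_sector (slope u) (slope v) \<subseteq> convex hull {0, u, v}"
proof
  fix x assume "x \<in> slope_sector (slope u) (slope v)"
  then obtain s f where x: "x = s *\<^sub>R f" and s: "0 \<le> s" "s \<le> 1" and f: "f \<in> frontier S"
    and f_slope: "slope u \<le> slope f" "slope f \<le> slope v"
    by (rule slope_sectorE)
  obtain a b where ab: "a \<ge> 0" "b \<ge> 0" "f = a *\<^sub>R u + b *\<^sub>R v"
    using conic_comb_if_slope_between[OF h_pos[OF u] h_pos[OF v] h_pos[OF f]] f_slope le by auto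
  have "s * (a + b) \<le> 1"
    using frontier_conic_comb_le_1[OF u v f ab] s ab by (intro mult_le_one) auto
  moreover have "x = (s * a) *\<^sub>R u + (s * b) *\<^sub>R v" using x ab by (simp add: scaleR_add_right)
  ultimately show "x \<in> convex hull {0, u, v}" unfolding convex_hull_3_alt using s ab
    by (intro CollectI exI[of _ "s * a"] exI[of _ "s * b"]) (simp add: distrib_left)
qed

lemma compact_slope_sector:
  assumes u: "u \<in> frontier S" and v: "v \<in> frontier S" and le: "slope u \<le> slope v"
  shows "compact (slope_sector (slope u) (slope v))"
proof -
  define K where "K = frontier S \<inter> slope -` {slope u..slope v}"
  have "closed K" unfolding K_def
    by (rule continuous_closed_preimage[OF continuous_on_slope]) auto
  moreover have "K \<subseteq> convex hull {0, u, v}"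
    using slope_sector_subset_triangle[OF u v le] slope_sectorI[of 1 _ "slope u" "slope v"]
    by (force simp: K_def)
  ultimately have "compact K"
    by (meson bounded_subset compact_eq_bounded_closed finite_imp_compact_convex_hull finite.intros)
  then have "compact ((\<lambda>z. fst z *\<^sub>R snd z) ` ({0..1::real} \<times> K))"
    by (intro compact_continuous_image compact_Times continuous_intros) auto
  moreover have "slope_sector (slope u) (slope v) = (\<lambda>z. fst z *\<^sub>R snd z) ` ({0..1} \<times> K)"
    unfolding slope_sector_def K_def by (auto simp: image_iff) force+
  ultimately show ?thesis by simp
qed

lemma triangle_subset_slope_sector:
  assumes l: "\<And>x. x \<in> S \<Longrightarrow> l \<bullet> x \<ge> 1"
    and u: "u \<in> frontier S" and v: "v \<in> frontier S" and le: "slope u \<le> slope v"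
    and c: "c > 0" "d > 0" and lu: "l \<bullet> (c *\<^sub>R u) = 1" and lv: "l \<bullet> (d *\<^sub>R v) = 1"
  shows "convex hull {0, c *\<^sub>R u, d *\<^sub>R v} \<subseteq> slope_sector (slope u) (slope v)"
proof
  fix x assume "x \<in> convex hull {0, c *\<^sub>R u, d *\<^sub>R v}"
  then obtain \<alpha> \<beta> where x: "x = (\<alpha> * c) *\<^sub>R u + (\<beta> * d) *\<^sub>R v" and \<alpha>\<beta>: "\<alpha> \<ge> 0" "\<beta> \<ge> 0" "\<alpha> + \<beta> \<le> 1"
    unfolding convex_hull_3_alt by auto
  show "x \<in> slope_sector (slope u) (slope v)"
  proof (cases "\<alpha> + \<beta> = 0")
    case True
    then have "\<alpha> = 0" "\<beta> = 0" using \<alpha>\<beta> by linarith+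
    then have "x = 0 *\<^sub>R u" using x by simp
    then show ?thesis using u le by (metis slope_sectorI order_refl zero_le_one)
  next
    case False
    define m where "m = \<alpha> * c + \<beta> * d"
    have m: "m > 0"
      using False \<alpha>\<beta> c mult_pos_pos[of \<alpha> c] mult_pos_pos[of \<beta> d] unfolding m_def
      by (smt (verit) mult_nonneg_nonneg)
    have "(1 / m) *\<^sub>R x = ((\<alpha> * c) / m) *\<^sub>R u + ((\<beta> * d) / m) *\<^sub>R v"
      by (simp add: x scaleR_add_right)
    also have "\<dots> \<in> S"
      using convexD[OF S_convex, of u v "\<alpha> * c / m" "\<beta> * d / m"] u v frontier_subset_S \<alpha>\<beta> c m
      by (auto simp: m_def add_divide_distrib[symmetric])
    finally obtain r where "r > 0" "r *\<^sub>R ((1 / m) *\<^sub>R x) \<in> frontier S"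
      by (rule frontier_point_on_ray)
    then have r: "r > 0" "(r / m) *\<^sub>R x \<in> frontier S" by simp_all
    \<comment> \<open>\<open>l\<close> equals \<open>\<alpha> + \<beta> \<le> 1\<close> on \<open>x\<close> but is \<open>\<ge> 1\<close> on the frontier point, so \<open>x\<close> lies below it\<close>
    have "l \<bullet> x = \<alpha> + \<beta>" using lu lv by (simp add: x inner_add_right mult.assoc)
    moreover have "l \<bullet> ((r / m) *\<^sub>R x) \<ge> 1" using l r frontier_subset_S by blast
    ultimately have "1 \<le> r / m * (\<alpha> + \<beta>)" by simp
    moreover have "r / m * (\<alpha> + \<beta>) \<le> r / m" using \<alpha>\<beta> r m by (intro mult_left_le) auto
    ultimately have "r / m \<ge> 1" by linarith
    have "slope u \<le> slope x" "slope x \<le> slope v"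
      using slope_mediant[OF h_pos[OF u] h_pos[OF v] le, of "\<alpha> * c" "\<beta> * d"] x \<alpha>\<beta> c m
      by (auto simp: m_def)
    moreover have "x = (m / r) *\<^sub>R ((r / m) *\<^sub>R x)" "slope ((r / m) *\<^sub>R x) = slope x"
      using r m by (simp_all add: slope_scaleR)
    moreover have "0 \<le> m / r" "m / r \<le> 1" using r m \<open>r / m \<ge> 1\<close> by (auto simp: field_simps)
    ultimately show ?thesis using slope_sectorI[of "m / r" "(r / m) *\<^sub>R x"] r(2) by simp
  qed
qed


definition sector_area :: "real \<Rightarrow> real \<Rightarrow> real" where
  "sector_area \<alpha> \<beta> = measure lebesgue (slope_sector \<alpha> \<beta>)"

lemma sector_area_le:
  assumes u: "u \<in> frontier S" and v: "v \<in> frontier S" and le: "slope u \<le> slope v"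
  shows "sector_area (slope u) (slope v) \<le> \<bar>det2 u v\<bar> / 2"
proof -
  have "sector_area (slope u) (slope v) \<le> measure lebesgue (convex hull {0, u, v})"
    unfolding sector_area_def
    by (rule measure_mono_fmeasurable[OF slope_sector_subset_triangle[OF u v le]])
      (use compact_slope_sector[OF u v le] finite_imp_compact_convex_hull[of "{0, u, v}"]
        in \<open>auto intro: lmeasurable_compact fmeasurableD\<close>)
  then show ?thesis by (simp add: measure_triangle)
qed

lemma sector_area_ge:
  assumes l: "\<And>x. x \<in> S \<Longrightarrow> l \<bullet> x \<ge> 1"
    and u: "u \<in> frontier S" and v: "v \<in> frontier S" and le: "slope u \<le> slope v"
    and c: "c > 0" "d > 0" and lu: "l \<bullet> (c *\<^sub>R u) = 1" and lv: "l \<bullet> (d *\<^sub>R v) = 1"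
  shows "c * d * \<bar>det2 u v\<bar> / 2 \<le> sector_area (slope u) (slope v)"
proof -
  have "measure lebesgue (convex hull {0, c *\<^sub>R u, d *\<^sub>R v}) \<le> sector_area (slope u) (slope v)"
    unfolding sector_area_def
    by (rule measure_mono_fmeasurable[OF triangle_subset_slope_sector[OF l u v le c lu lv]])
      (use compact_slope_sector[OF u v le] finite_imp_compact_convex_hull[of "{0, c *\<^sub>R u, d *\<^sub>R v}"]
        in \<open>auto intro: lmeasurable_compact fmeasurableD\<close>)
  then show ?thesis using c by (simp add: measure_triangle abs_mult mult_ac)
qed

lemma slope_sector_Un:
  assumes "\<alpha> \<le> \<beta>" "\<beta> \<le> \<gamma>"
  shows "slope_sector \<alpha> \<gamma> = slope_sector \<alpha> \<beta> \<union> slope_sector \<beta> \<gamma>"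
proof (intro equalityI subsetI)
  fix x assume "x \<in> slope_sector \<alpha> \<gamma>"
  then show "x \<in> slope_sector \<alpha> \<beta> \<union> slope_sector \<beta> \<gamma>"
    by (rule slope_sectorE) (metis UnI1 UnI2 linorder_le_cases slope_sectorI)
next
  fix x assume "x \<in> slope_sector \<alpha> \<beta> \<union> slope_sector \<beta> \<gamma>"
  then show "x \<in> slope_sector \<alpha> \<gamma>"
    using assms by (auto elim!: slope_sectorE intro!: slope_sectorI)
qed

lemma slope_sector_Int_subset_line:
  assumes v: "v \<in> frontier S"
  shows "slope_sector \<alpha> (slope v) \<inter> slope_sector (slope v) \<beta> \<subseteq> {x. rot90 v \<bullet> x = 0}"
proof
  fix x assume x: "x \<in> slope_sector \<alpha> (slope v) \<inter> slope_sector (slope v) \<beta>"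
  then obtain s f where sf: "x = s *\<^sub>R f" "0 \<le> s" "f \<in> frontier S" "slope f \<le> slope v"
    by (metis IntD1 slope_sectorE)
  from x obtain s' f' where sf': "x = s' *\<^sub>R f'" "0 \<le> s'" "f' \<in> frontier S" "slope v \<le> slope f'"
    by (metis IntD2 slope_sectorE)
  show "x \<in> {x. rot90 v \<bullet> x = 0}"
  proof (cases "s = 0 \<or> s' = 0")
    case False
    then have "slope f = slope x" "slope f' = slope x"
      using sf(1,2) sf'(1,2) slope_scaleR[of s f] slope_scaleR[of s' f'] by (metis less_eq_real_def)+
    then have "slope f = slope v" using sf sf' by simp
    then have "f = ((h \<bullet> f) / (h \<bullet> v)) *\<^sub>R v"
      using parallel_if_slope_eq[OF h_pos[OF v] h_pos[OF sf(3)]] by simp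
    then have "rot90 v \<bullet> f = 0"
      by (metis det2_eq_rot90_inner det2_scaleR_right det2_self mult_zero_right)
    then show ?thesis using sf by simp
  qed (use sf sf' in auto)
qed

lemma sector_area_add:
  assumes u: "u \<in> frontier S" and v: "v \<in> frontier S" and w: "w \<in> frontier S"
    and uv: "slope u \<le> slope v" and vw: "slope v \<le> slope w"
  shows "sector_area (slope u) (slope w) = sector_area (slope u) (slope v) + sector_area (slope v) (slope w)"
proof -
  have "rot90 v \<noteq> 0"
    using v frontier_subset_S zero_notin_S by (metis norm_rot90 norm_eq_zero subsetD)
  then have "measure lebesgue (slope_sector (slope u) (slope v) \<inter> slope_sector (slope v) (slope w)) = 0"
    using slope_sector_Int_subset_line[OF v] negligible_hyperplane negligible_subset
      negligible_imp_measure0 by metis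
  moreover have "slope_sector (slope u) (slope v) \<in> lmeasurable" "slope_sector (slope v) (slope w) \<in> lmeasurable"
    using compact_slope_sector[OF u v uv] compact_slope_sector[OF v w vw] by (auto intro: lmeasurable_compact)
  ultimately show ?thesis
    unfolding sector_area_def slope_sector_Un[OF uv vw] by (subst measure_Un3) simp_all
qed

lemma hang_eq_sector_area:
  assumes w: "w \<in> frontier S"
  shows "hang S w0 w = (if slope w0 \<le> slope w then 2 * sector_area (slope w0) (slope w)
                        else - 2 * sector_area (slope w) (slope w0))"
proof -
  have "sgn (fst w0 * snd w - snd w0 * fst w) = sgn (slope w - slope w0)"
    using sgn_det2_eq_sgn_slope_diff[OF h_pos[OF w0_frontier] h_pos[OF w]] by (simp add: det2_def)
  moreover have "sector_area (slope w0) (slope w0) = 0"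
    using sector_area_le[OF w0_frontier w0_frontier] unfolding sector_area_def
    by (intro order.antisym) simp_all
  ultimately show ?thesis
    unfolding hang_def sector_eq_slope_sector[OF w] sector_area_def[symmetric]
    by (cases "slope w0" "slope w" rule: linorder_cases) auto
qed

lemma hang_diff_eq_sector_area:
  assumes u: "u \<in> frontier S" and v: "v \<in> frontier S" and le: "slope u \<le> slope v"
  shows "hang S w0 v - hang S w0 u = 2 * sector_area (slope u) (slope v)"
proof -
  consider "slope w0 \<le> slope u" | "slope u < slope w0" "slope w0 \<le> slope v" | "slope v < slope w0"
    by linarith
  then show ?thesis
  proof cases
    case 1
    then show ?thesis using sector_area_add[OF w0_frontier u v 1 le] le
      by (simp add: hang_eq_sector_area[OF u] hang_eq_sector_area[OF v])
  next
    case 2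
    then show ?thesis using sector_area_add[OF u w0_frontier v]
      by (simp add: hang_eq_sector_area[OF u] hang_eq_sector_area[OF v])
  next
    case 3
    then show ?thesis using sector_area_add[OF u v w0_frontier le] le
      by (simp add: hang_eq_sector_area[OF u] hang_eq_sector_area[OF v])
  qed
qed

lemma hang_diff_mult_det2_nonneg:
  assumes u: "u \<in> frontier S" and v: "v \<in> frontier S"
  shows "(hang S w0 v - hang S w0 u) * det2 u v \<ge> 0"
proof (cases "slope u \<le> slope v")
  case True
  then have "det2 u v \<ge> 0" using det2_pos_iff[OF h_pos[OF u] h_pos[OF v]] by linarith
  then show ?thesis
    using hang_diff_eq_sector_area[OF u v True] by (simp add: sector_area_def)
next
  case False
  then have "det2 u v \<le> 0" using det2_pos_iff[OF h_pos[OF u] h_pos[OF v]] by linarith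
  moreover have "hang S w0 v - hang S w0 u \<le> 0"
    using hang_diff_eq_sector_area[OF v u] False measure_nonneg[of lebesgue "slope_sector (slope v) (slope u)"]
    unfolding sector_area_def by linarith
  ultimately show ?thesis by (simp add: mult_nonpos_nonpos)
qed

lemma abs_hang_diff_le:
  assumes u: "u \<in> frontier S" and v: "v \<in> frontier S"
  shows "\<bar>hang S w0 v - hang S w0 u\<bar> \<le> \<bar>det2 u v\<bar>"
proof (cases "slope u \<le> slope v")
  case True
  then show ?thesis
    using sector_area_le[OF u v True] hang_diff_eq_sector_area[OF u v True]
    by (simp add: sector_area_def)
next
  case False
  then show ?thesis
    using sector_area_le[OF v u] hang_diff_eq_sector_area[OF v u]
    by (simp add: sector_area_def det2_commute[of v u] abs_minus_commute)
qed

lemma abs_hang_diff_ge: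
  assumes l: "\<And>x. x \<in> S \<Longrightarrow> l \<bullet> x \<ge> 1"
    and u: "u \<in> frontier S" and v: "v \<in> frontier S"
    and c: "c > 0" "d > 0" and lu: "l \<bullet> (c *\<^sub>R u) = 1" and lv: "l \<bullet> (d *\<^sub>R v) = 1"
  shows "c * d * \<bar>det2 u v\<bar> \<le> \<bar>hang S w0 v - hang S w0 u\<bar>"
proof (cases "slope u \<le> slope v")
  case True
  then show ?thesis
    using sector_area_ge[OF l u v True c lu lv] hang_diff_eq_sector_area[OF u v True]
    by (simp add: sector_area_def)
next
  case False
  then have "slope v \<le> slope u" by simp
  then show ?thesis
    using sector_area_ge[OF l v u _ c(2,1) lv lu] hang_diff_eq_sector_area[OF v u]
    by (simp add: sector_area_def det2_commute[of v u] mult.commute)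
qed

lemma hang_inj:
  assumes u: "u \<in> frontier S" and v: "v \<in> frontier S" and eq: "hang S w0 u = hang S w0 v"
  shows "u = v"
proof (cases "slope u = slope v")
  case True
  have "v = ((h \<bullet> v) / (h \<bullet> u)) *\<^sub>R u"
    using parallel_if_slope_eq[OF h_pos[OF u] h_pos[OF v] True] .
  moreover have "(h \<bullet> v) / (h \<bullet> u) = 1"
    using frontier_radial_unique[OF u, of "(h \<bullet> v) / (h \<bullet> u)"] calculation v h_pos[OF u] h_pos[OF v]
    by (metis divide_pos_pos)
  ultimately show ?thesis by simp
next
  case False
  then have "det2 u v \<noteq> 0" using det2_pos_iff(2)[OF h_pos[OF u] h_pos[OF v]] by simp
  moreover have "(1 / (h \<bullet> u)) * (1 / (h \<bullet> v)) * \<bar>det2 u v\<bar> \<le> \<bar>hang S w0 v - hang S w0 u\<bar>"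
    using h_pos[OF u] h_pos[OF v] by (intro abs_hang_diff_ge[OF h_ge_1 u v]) auto
  ultimately show ?thesis using eq h_pos[OF u] h_pos[OF v] by (simp add: divide_le_0_iff mult_le_0_iff)
qed

lemma hpoint_hang: "w \<in> frontier S \<Longrightarrow> hpoint S w0 (hang S w0 w) = w"
  unfolding hpoint_def by (rule the_equality) (auto dest: hang_inj)

lemma hpoint_in_frontier: "\<theta> \<in> hdom S w0 \<Longrightarrow> hpoint S w0 \<theta> \<in> frontier S"
  and hang_hpoint: "\<theta> \<in> hdom S w0 \<Longrightarrow> hang S w0 (hpoint S w0 \<theta>) = \<theta>"
  by (auto simp: hdom_def hpoint_hang)

lemma hang_diff_approx:
  assumes l: "\<And>x. x \<in> S \<Longrightarrow> l \<bullet> x \<ge> 1"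
    and u: "u \<in> frontier S" and v: "v \<in> frontier S" and lu: "l \<bullet> u = 1"
  shows "\<bar>hang S w0 v - hang S w0 u - det2 u v\<bar> \<le> \<bar>det2 u v\<bar> * (l \<bullet> v - 1)"
proof -
  define L where "L = l \<bullet> v"
  define H where "H = hang S w0 v - hang S w0 u"
  have L: "L \<ge> 1" unfolding L_def using l v frontier_subset_S by blast
  have "\<bar>det2 u v\<bar> / L \<le> \<bar>H\<bar>"
    using abs_hang_diff_ge[OF l u v, of 1 "1 / L"] lu L by (simp add: H_def L_def)
  moreover have "\<bar>H\<bar> \<le> \<bar>det2 u v\<bar>" using abs_hang_diff_le[OF u v] by (simp add: H_def)
  moreover have "H * det2 u v \<ge> 0" using hang_diff_mult_det2_nonneg[OF u v] by (simp add: H_def)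
  ultimately have "\<bar>H - det2 u v\<bar> \<le> \<bar>det2 u v\<bar> * (1 - 1 / L)"
    by (cases "0 \<le> det2 u v"; cases "0 \<le> H") (simp_all add: zero_le_mult_iff algebra_simps)
  also have "\<dots> \<le> \<bar>det2 u v\<bar> * (L - 1)"
  proof (rule mult_left_mono)
    have "(L - 1) * 1 \<le> (L - 1) * L" using L by (intro mult_left_mono) auto
    then show "1 - 1 / L \<le> L - 1" using L by (simp add: field_simps)
  qed simp
  finally show ?thesis by (simp add: H_def L_def)
qed

end

section \<open>The antipolar\<close>

text \<open>The pairing \<open>p x - q y\<close> of \<open>(p, q)\<close> with \<open>(x, y)\<close> is \<open>mirror (p, q) \<bullet> (x, y)\<close>.\<close>

definition mirror :: "real \<times> real \<Rightarrow> real \<times> real" where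
  "mirror g = (fst g, - snd g)"

lemma inner_mirror: "mirror g \<bullet> z = fst g * fst z - snd g * snd z"
  by (simp add: mirror_def inner_real_pair)

lemma mirror_0 [simp]: "mirror 0 = 0"
  and mirror_mirror [simp]: "mirror (mirror g) = g"
  by (simp_all add: mirror_def zero_prod_def)

lemma norm_mirror [simp]: "norm (mirror g) = norm g"
  by (simp add: mirror_def norm_prod_def)

lemma mirror_scaleR: "mirror (c *\<^sub>R g) = c *\<^sub>R mirror g"
  and mirror_diff: "mirror (g - g') = mirror g - mirror g'"
  by (simp_all add: mirror_def)

lemma mirror_inner_commute: "mirror g \<bullet> w = mirror w \<bullet> g"
  by (simp add: inner_mirror mult.commute)

lemma mirror_inner_swap: "mirror g \<bullet> z = g \<bullet> mirror z"
  by (simp add: mirror_def inner_real_pair)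

lemma mirror_inner_self: "mirror g \<bullet> mirror g = (norm g)\<^sup>2"
  by (metis norm_mirror power2_norm_eq_inner)

lemma abs_mirror_inner_le: "\<bar>mirror g \<bullet> z\<bar> \<le> norm g * norm z"
  using Cauchy_Schwarz_ineq2[of "mirror g" z] by simp

lemma mem_antipolar_iff: "g \<in> antipolar \<Omega> \<longleftrightarrow> (\<forall>w\<in>\<Omega>. mirror g \<bullet> w \<ge> 1)"
  by (cases g) (auto simp: antipolar_def inner_mirror case_prod_beta)

lemma antipolar_eq_Inter_halfspaces: "antipolar \<Omega> = (\<Inter>w\<in>\<Omega>. {g. mirror w \<bullet> g \<ge> 1})"
  by (rule set_eqI) (simp add: mem_antipolar_iff mirror_inner_commute)

lemma closed_antipolar: "closed (antipolar \<Omega>)"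
  unfolding antipolar_eq_Inter_halfspaces by (intro closed_INT ballI closed_halfspace_ge)

lemma convex_antipolar: "convex (antipolar \<Omega>)"
  unfolding antipolar_eq_Inter_halfspaces by (intro convex_INT ballI convex_halfspace_ge)

lemma antipolar_nonzero: "\<Omega> \<noteq> {} \<Longrightarrow> g \<in> antipolar \<Omega> \<Longrightarrow> g \<noteq> 0"
  by (auto simp: mem_antipolar_iff)

lemma antipolar_scaleR:
  assumes c: "c \<ge> 1" and g: "g \<in> antipolar \<Omega>"
  shows "c *\<^sub>R g \<in> antipolar \<Omega>"
proof -
  have "mirror (c *\<^sub>R g) \<bullet> w \<ge> 1" if "w \<in> \<Omega>" for w
  proof -
    have "c * (mirror g \<bullet> w) \<ge> 1 * 1"
      using g that c by (intro mult_mono) (auto simp: mem_antipolar_iff)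
    then show ?thesis by (simp add: mirror_scaleR)
  qed
  then show ?thesis by (simp add: mem_antipolar_iff)
qed

lemma pos_coneI: "c \<ge> 0 \<Longrightarrow> w \<in> \<Omega> \<Longrightarrow> c *\<^sub>R w \<in> pos_cone \<Omega>"
  unfolding pos_cone_def by blast

lemma pos_coneE:
  assumes "y \<in> pos_cone \<Omega>"
  obtains c w where "y = c *\<^sub>R w" "c \<ge> 0" "w \<in> \<Omega>"
  using assms unfolding pos_cone_def by blast

lemma scaleR_closure_pos_cone:
  assumes "c \<ge> 0" "y \<in> closure (pos_cone \<Omega>)"
  shows "c *\<^sub>R y \<in> closure (pos_cone \<Omega>)"
proof -
  have "(*\<^sub>R) c ` pos_cone \<Omega> \<subseteq> pos_cone \<Omega>"
  proof (rule image_subsetI)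
    fix y assume "y \<in> pos_cone \<Omega>"
    then show "c *\<^sub>R y \<in> pos_cone \<Omega>"
      by (rule pos_coneE) (use assms(1) pos_coneI[of "c * _"] in auto)
  qed
  then have "(*\<^sub>R) c ` closure (pos_cone \<Omega>) \<subseteq> closure (pos_cone \<Omega>)"
    by (metis closure_mono closure_scaleR)
  then show ?thesis using assms(2) by blast
qed

lemma antipolar_nonneg_on_cone:
  assumes g: "g \<in> antipolar \<Omega>" and y: "y \<in> closure (pos_cone \<Omega>)"
  shows "mirror g \<bullet> y \<ge> 0"
proof -
  have "pos_cone \<Omega> \<subseteq> {y. mirror g \<bullet> y \<ge> 0}"
  proof
    fix y assume "y \<in> pos_cone \<Omega>"
    then obtain c w where "y = c *\<^sub>R w" "c \<ge> 0" "w \<in> \<Omega>" by (rule pos_coneE)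
    moreover have "mirror g \<bullet> w \<ge> 1" using g \<open>w \<in> \<Omega>\<close> by (simp add: mem_antipolar_iff)
    ultimately show "y \<in> {y. mirror g \<bullet> y \<ge> 0}" by simp
  qed
  then have "closure (pos_cone \<Omega>) \<subseteq> {y. mirror g \<bullet> y \<ge> 0}"
    by (intro closure_minimal closed_halfspace_ge)
  then show ?thesis using y by blast
qed

lemma ray_subset_frontier_cone:
  assumes g: "g \<in> antipolar \<Omega>" "g \<noteq> 0" and d: "d \<in> closure (pos_cone \<Omega>)" "mirror g \<bullet> d = 0"
  shows "ray d \<subseteq> frontier (closure (pos_cone \<Omega>))"
proof
  fix y assume "y \<in> ray d"
  then obtain t where y: "y = t *\<^sub>R d" "t \<ge> 0" unfolding ray_def by blast
  have "interior (closure (pos_cone \<Omega>)) \<subseteq> interior {y. mirror g \<bullet> y \<ge> 0}"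
    using antipolar_nonneg_on_cone[OF g(1)] by (intro interior_mono) blast
  also have "\<dots> = {y. mirror g \<bullet> y > 0}"
    using g(2) by (simp add: mirror_def prod_eq_iff)
  finally show "y \<in> frontier (closure (pos_cone \<Omega>))"
    using scaleR_closure_pos_cone[OF y(2) d(1)] d(2) y(1) by (auto simp: frontier_def)
qed

text \<open>This is where property (**) enters: a functional of the antipolar that vanished on a
  direction of the closed cone would vanish on a boundary ray, yet stay \<open>\<ge> 1\<close> on \<open>\<Omega>\<close>,
  which comes arbitrarily close to that ray.\<close>
lemma antipolar_pos_on_cone:
  assumes i: "prop_i \<Omega>" and starstar: "prop_starstar \<Omega>"
    and g: "g \<in> antipolar \<Omega>" and d: "d \<in> closure (pos_cone \<Omega>)" "d \<noteq> 0"
  shows "mirror g \<bullet> d > 0"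
proof (rule ccontr)
  assume "\<not> mirror g \<bullet> d > 0"
  then have gd: "mirror g \<bullet> d = 0" using antipolar_nonneg_on_cone[OF g d(1)] by simp
  have ne: "\<Omega> \<noteq> {}" using i by (simp add: prop_i_def)
  have g0: "g \<noteq> 0" using antipolar_nonzero[OF ne g] .
  have "boundary_ray (closure (pos_cone \<Omega>)) (ray d)"
    unfolding boundary_ray_def using ray_subset_frontier_cone[OF g g0 d(1) gd] d(2) by blast
  then have "setdist (ray d) \<Omega> = 0" using starstar by (simp add: prop_starstar_def)
  moreover have "1 / norm g \<le> setdist (ray d) \<Omega>"
  proof (rule le_setdistI)
    show "ray d \<noteq> {}" unfolding ray_def using order_refl by blast
    show "\<Omega> \<noteq> {}" by (fact ne)
    fix y w assume y: "y \<in> ray d" and w: "w \<in> \<Omega>"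
    have "mirror g \<bullet> y = 0" using y gd by (auto simp: ray_def)
    then have "1 \<le> mirror g \<bullet> (w - y)" using g w by (simp add: mem_antipolar_iff inner_diff_right)
    also have "\<dots> \<le> norm g * dist y w"
      using abs_mirror_inner_le[of g "w - y"] by (simp add: dist_norm norm_minus_commute)
    finally show "1 / norm g \<le> dist y w" using g0 by (simp add: field_simps mult.commute)
  qed
  ultimately show False using g0 by simp
qed

lemma antipolar_coercive:
  assumes i: "prop_i \<Omega>" and starstar: "prop_starstar \<Omega>" and g: "g \<in> antipolar \<Omega>"
  obtains \<kappa> where "\<kappa> > 0" "\<And>w. w \<in> \<Omega> \<Longrightarrow> mirror g \<bullet> w \<ge> \<kappa> * norm w"
proof -
  define K where "K = closure (pos_cone \<Omega>) \<inter> sphere 0 1"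
  have normalized_in_K: "(1 / norm w) *\<^sub>R w \<in> K" if "w \<in> \<Omega>" for w
  proof -
    have "w \<noteq> 0" using that i by (auto simp: prop_i_def)
    then show ?thesis
      using pos_coneI[of "1 / norm w" w \<Omega>] that closure_subset by (auto simp: K_def)
  qed
  have "K \<noteq> {}" using i normalized_in_K by (auto simp: prop_i_def)
  moreover have "compact K" unfolding K_def by (intro closed_Int_compact) auto
  moreover have "continuous_on K (\<lambda>e. mirror g \<bullet> e)" by (intro continuous_intros)
  ultimately obtain d where d: "d \<in> K" and d_min: "\<And>e. e \<in> K \<Longrightarrow> mirror g \<bullet> d \<le> mirror g \<bullet> e"
    using continuous_attains_inf by metis
  have "mirror g \<bullet> d > 0"
    using antipolar_pos_on_cone[OF i starstar g, of d] d by (force simp: K_def)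
  moreover have "mirror g \<bullet> w \<ge> (mirror g \<bullet> d) * norm w" if "w \<in> \<Omega>" for w
  proof -
    have "w \<noteq> 0" using that i by (auto simp: prop_i_def)
    then show ?thesis using d_min[OF normalized_in_K[OF that]] by (simp add: field_simps)
  qed
  ultimately show ?thesis using that by blast
qed

lemma scaleR_antipolar_in_interior:
  assumes i: "prop_i \<Omega>" and starstar: "prop_starstar \<Omega>" and g: "g \<in> antipolar \<Omega>" and c: "c > 1"
  shows "c *\<^sub>R g \<in> interior (antipolar \<Omega>)"
proof -
  obtain \<kappa> where \<kappa>: "\<kappa> > 0" "\<And>w. w \<in> \<Omega> \<Longrightarrow> mirror g \<bullet> w \<ge> \<kappa> * norm w"
    using antipolar_coercive[OF i starstar g] by blast
  have "ball (c *\<^sub>R g) (\<kappa> * (c - 1)) \<subseteq> antipolar \<Omega>"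
  proof
    fix g' assume "g' \<in> ball (c *\<^sub>R g) (\<kappa> * (c - 1))"
    then have close: "norm (g' - c *\<^sub>R g) \<le> \<kappa> * (c - 1)" by (simp add: dist_norm norm_minus_commute)
    have "mirror g' \<bullet> w \<ge> 1" if w: "w \<in> \<Omega>" for w
    proof -
      have "- (mirror (g' - c *\<^sub>R g) \<bullet> w) \<le> \<kappa> * (c - 1) * norm w"
        using abs_mirror_inner_le[of "g' - c *\<^sub>R g" w] mult_right_mono[OF close norm_ge_zero[of w]] by linarith
      also have "\<dots> \<le> (c - 1) * (mirror g \<bullet> w)"
        using \<kappa>(2)[OF w] c by (simp add: mult.commute mult.left_commute mult_left_mono)
      finally have "(c - 1) * (mirror g \<bullet> w) + mirror (g' - c *\<^sub>R g) \<bullet> w \<ge> 0" by simp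
      moreover have "mirror g \<bullet> w \<ge> 1" using g w by (simp add: mem_antipolar_iff)
      ultimately show ?thesis
        by (simp add: mirror_diff mirror_scaleR inner_diff_left algebra_simps)
    qed
    then show "g' \<in> antipolar \<Omega>" by (simp add: mem_antipolar_iff)
  qed
  moreover have "\<kappa> * (c - 1) > 0" using \<kappa>(1) c by simp
  ultimately show ?thesis using mem_interior by blast
qed

lemma prop_i_antipolar:
  assumes "prop_i \<Omega>" "antipolar \<Omega> \<noteq> {}"
  shows "prop_i (antipolar \<Omega>)"
proof -
  have "\<Omega> \<noteq> {}" using assms(1) by (simp add: prop_i_def)
  then have "(0::real \<times> real) \<notin> antipolar \<Omega>" using antipolar_nonzero by blast
  moreover have "(\<lambda>g. c *\<^sub>R g) ` antipolar \<Omega> \<subseteq> antipolar \<Omega>" if "c > 1" for c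
    using that by (blast intro: antipolar_scaleR less_imp_le)
  ultimately show ?thesis
    using assms(2) closed_antipolar convex_antipolar by (simp add: prop_i_def)
qed

lemma prop_star_antipolar:
  assumes "prop_i \<Omega>" "prop_starstar \<Omega>"
  shows "prop_star (antipolar \<Omega>)"
  using scaleR_antipolar_in_interior[OF assms] by (auto simp: prop_star_def frontier_def)

lemma double_in_interior:
  assumes i: "prop_i \<Omega>" and star: "prop_star \<Omega>" and u: "u \<in> \<Omega>"
  shows "2 *\<^sub>R u \<in> interior \<Omega>"
proof -
  have "(\<lambda>x. 2 *\<^sub>R x) ` \<Omega> \<subseteq> \<Omega>" using i by (simp add: prop_i_def)
  then have "2 *\<^sub>R u \<in> \<Omega>" using u by blast
  moreover have "(\<lambda>x. 2 *\<^sub>R x) ` \<Omega> \<inter> frontier \<Omega> = {}" using star by (simp add: prop_star_def)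
  then have "2 *\<^sub>R u \<notin> frontier \<Omega>" using u by blast
  ultimately show ?thesis using i by (simp add: frontier_def prop_i_def)
qed

lemma scaleR_in_interior_pos_cone:
  assumes i: "prop_i \<Omega>" and star: "prop_star \<Omega>" and w: "w \<in> \<Omega>" and r: "r > 0"
  shows "r *\<^sub>R w \<in> interior (pos_cone \<Omega>)"
proof (rule interiorI)
  show "open ((\<lambda>x. (r / 2) *\<^sub>R x) ` interior \<Omega>)" using r by (intro open_scaling) auto
  show "r *\<^sub>R w \<in> (\<lambda>x. (r / 2) *\<^sub>R x) ` interior \<Omega>"
    using double_in_interior[OF i star w] by (intro image_eqI[of _ _ "2 *\<^sub>R w"]) auto
  show "(\<lambda>x. (r / 2) *\<^sub>R x) ` interior \<Omega> \<subseteq> pos_cone \<Omega>"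
  proof (rule image_subsetI)
    fix x assume "x \<in> interior \<Omega>"
    then show "(r / 2) *\<^sub>R x \<in> pos_cone \<Omega>" using r interior_subset by (intro pos_coneI) auto
  qed
qed

lemma exists_supporting_antipolar:
  assumes i: "prop_i \<Omega>" and star: "prop_star \<Omega>" and u: "u \<in> frontier \<Omega>"
  obtains g where "g \<in> antipolar \<Omega>" "mirror g \<bullet> u = 1"
proof -
  have cl: "closed \<Omega>" and cv: "convex \<Omega>" using i by (auto simp: prop_i_def)
  have uO: "u \<in> \<Omega>" using u cl frontier_subset_closed by blast
  have int2: "2 *\<^sub>R u \<in> interior \<Omega>" using double_in_interior[OF i star uO] .
  then have "rel_interior \<Omega> = interior \<Omega>" by (intro rel_interior_nonempty_interior) blast
  then have "u \<notin> rel_interior \<Omega>" using u by (simp add: frontier_def)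
  then obtain a where a: "a \<noteq> 0" and au: "\<And>y. y \<in> \<Omega> \<Longrightarrow> a \<bullet> u \<le> a \<bullet> y"
    using supporting_hyperplane_relative_frontier[OF cv] uO closure_subset by (metis subsetD)
  \<comment> \<open>\<open>a \<bullet> u > 0\<close>: otherwise the point \<open>2u\<close> could not be interior\<close>
  obtain e where e: "e > 0" "ball (2 *\<^sub>R u) e \<subseteq> \<Omega>" using int2 mem_interior by blast
  define y where "y = 2 *\<^sub>R u - (e / 2 / norm a) *\<^sub>R a"
  have "y \<in> \<Omega>" using a e by (intro subsetD[OF e(2)]) (simp add: y_def dist_norm)
  then have "a \<bullet> u \<le> a \<bullet> y" by (rule au)
  also have "a \<bullet> y = 2 * (a \<bullet> u) - (e / 2 / norm a) * (norm a)\<^sup>2"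
    by (simp add: y_def inner_diff_right power2_norm_eq_inner)
  finally have "a \<bullet> u \<le> 2 * (a \<bullet> u) - (e / 2 / norm a) * (norm a)\<^sup>2" .
  moreover have "(e / 2 / norm a) * (norm a)\<^sup>2 > 0" using a e by simp
  ultimately have pos: "a \<bullet> u > 0" by linarith
  define g where "g = mirror ((1 / (a \<bullet> u)) *\<^sub>R a)"
  have g: "mirror g = (1 / (a \<bullet> u)) *\<^sub>R a" by (simp add: g_def)
  show ?thesis
  proof
    show "g \<in> antipolar \<Omega>" unfolding mem_antipolar_iff g using au pos by (auto simp: field_simps)
    show "mirror g \<bullet> u = 1" unfolding g using pos by simp
  qed
qed

lemma antipolar_frontier_if_supporting:
  assumes g: "g \<in> antipolar \<Omega>" and u: "u \<in> \<Omega>" and gu: "mirror g \<bullet> u = 1"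
  shows "g \<in> frontier (antipolar \<Omega>)"
proof -
  have "g \<notin> interior (antipolar \<Omega>)"
  proof
    assume "g \<in> interior (antipolar \<Omega>)"
    then obtain e where e: "e > 0" "ball g e \<subseteq> antipolar \<Omega>" using mem_interior by blast
    have g0: "g \<noteq> 0" using gu by auto
    define g' where "g' = (1 - e / (2 * norm g)) *\<^sub>R g"
    have "g' \<in> antipolar \<Omega>" using g0 e by (intro subsetD[OF e(2)]) (simp add: g'_def dist_norm algebra_simps)
    then have "mirror g' \<bullet> u \<ge> 1" using u by (simp add: mem_antipolar_iff)
    moreover have "mirror g' \<bullet> u = 1 - e / (2 * norm g)" using gu by (simp add: g'_def mirror_scaleR)
    moreover have "e / (2 * norm g) > 0" using e g0 by simp
    ultimately show False by linarith
  qed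
  then show ?thesis using g closure_subset by (auto simp: frontier_def)
qed

lemma antipolar_norm_le:
  assumes cball: "cball z \<delta> \<subseteq> closure (pos_cone \<Omega>)" and \<delta>: "\<delta> \<ge> 0" and g: "g \<in> antipolar \<Omega>"
  shows "\<delta> * norm g \<le> mirror g \<bullet> z"
proof (cases "g = 0")
  case False
  define q where "q = z - (\<delta> / norm g) *\<^sub>R mirror g"
  have "q \<in> cball z \<delta>" using False \<delta> by (simp add: q_def dist_norm)
  then have "mirror g \<bullet> q \<ge> 0" using antipolar_nonneg_on_cone[OF g] cball by blast
  then show ?thesis
    using False by (simp add: q_def inner_diff_right mirror_inner_self power2_eq_square)
qed simp

lemma supporting_selection_tendsto:
  assumes w: "(w \<longlongrightarrow> v) F" and v: "v \<in> \<Omega>" and B: "B \<ge> 0"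
    and G: "eventually (\<lambda>s. G s \<in> antipolar \<Omega> \<and> mirror (G s) \<bullet> w s = 1 \<and> norm (G s) \<le> B) F"
    and unique: "\<And>g. g \<in> antipolar \<Omega> \<Longrightarrow> mirror g \<bullet> v = 1 \<Longrightarrow> g = g0"
  shows "(G \<longlongrightarrow> g0) F"
  unfolding tendsto_iff
proof (intro allI impI)
  fix \<epsilon> :: real assume \<epsilon>: "\<epsilon> > 0"
  define K where "K = antipolar \<Omega> \<inter> cball 0 B \<inter> {g. \<epsilon> \<le> dist g g0}"
  have G_notin_K: "eventually (\<lambda>s. G s \<notin> K) F"
  proof (cases "K = {}")
    case False
    have "compact K" unfolding K_def
      by (intro compact_Int_closed closed_Int_compact closed_antipolar compact_cball closed_Collect_le continuous_intros)
    moreover have "continuous_on K (\<lambda>g. mirror g \<bullet> v)"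
      unfolding mirror_inner_swap by (intro continuous_intros)
    ultimately obtain g1 where g1: "g1 \<in> K" and g1_min: "\<And>g. g \<in> K \<Longrightarrow> mirror g1 \<bullet> v \<le> mirror g \<bullet> v"
      using continuous_attains_inf[OF _ False] by metis
    define m where "m = mirror g1 \<bullet> v"
    \<comment> \<open>\<open>m > 1\<close> because \<open>K\<close> avoids the only supporting functional \<open>g0\<close>\<close>
    have "m \<ge> 1" using g1 v by (auto simp: K_def m_def mem_antipolar_iff)
    moreover have "m \<noteq> 1" using g1 unique[of g1] \<epsilon> by (auto simp: K_def m_def)
    ultimately have m: "m > 1" by simp
    then have "eventually (\<lambda>s. dist (w s) v < (m - 1) / (B + 1)) F"
      using w B by (simp add: tendsto_iff)
    with G show ?thesis
    proof eventually_elim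
      case (elim s)
      have "mirror (G s) \<bullet> v = mirror (G s) \<bullet> w s + mirror (G s) \<bullet> (v - w s)"
        by (simp add: inner_diff_right)
      also have "\<dots> \<le> 1 + B * ((m - 1) / (B + 1))"
        using elim abs_mirror_inner_le[of "G s" "v - w s"] B
          mult_mono[of "norm (G s)" B "norm (v - w s)" "(m - 1) / (B + 1)"]
        by (simp add: dist_norm norm_minus_commute)
      also have "\<dots> < m" using m B by (simp add: field_simps)
      finally show ?case using g1_min[of "G s"] unfolding m_def by linarith
    qed
  qed (simp add: K_def)
  with G show "eventually (\<lambda>s. dist (G s) g0 < \<epsilon>) F"
    by eventually_elim (auto simp: K_def not_le)
qed

section \<open>Absolute continuity and difference quotients\<close>

lemma abs_cont_on_imp_continuous_on:
  fixes f :: "real \<Rightarrow> 'a::real_normed_vector"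
  assumes "abs_cont_on a b f"
  shows "continuous_on {a..b} f"
  unfolding continuous_on_iff
proof (intro ballI allI impI)
  fix t e :: real assume t: "t \<in> {a..b}" and e: "e > 0"
  from assms[unfolded abs_cont_on_def, rule_format, OF e]
  obtain \<delta> where \<delta>: "\<delta> > 0" and small: "\<forall>(n::nat) u v. (\<forall>i<n. a \<le> u i \<and> u i \<le> v i \<and> v i \<le> b) \<and>
      (\<forall>i<n. \<forall>j<n. i \<noteq> j \<longrightarrow> v i \<le> u j \<or> v j \<le> u i) \<and> (\<Sum>i<n. v i - u i) < \<delta> \<longrightarrow>
      (\<Sum>i<n. norm (f (v i) - f (u i))) < e"
    by blast
  show "\<exists>\<delta>>0. \<forall>s\<in>{a..b}. dist s t < \<delta> \<longrightarrow> dist (f s) (f t) < e"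
  proof (intro exI[of _ \<delta>] conjI ballI impI)
    fix s assume s: "s \<in> {a..b}" and st: "dist s t < \<delta>"
    have "\<forall>i<(1::nat). a \<le> min s t \<and> min s t \<le> max s t \<and> max s t \<le> b" using s t by auto
    moreover have "\<forall>i<(1::nat). \<forall>j<(1::nat). i \<noteq> j \<longrightarrow> max s t \<le> min s t \<or> max s t \<le> min s t"
      by simp
    moreover have "(\<Sum>i<(1::nat). max s t - min s t) < \<delta>" using st by (simp add: dist_real_def)
    ultimately have "(\<Sum>i<(1::nat). norm (f (max s t) - f (min s t))) < e"
      using small[rule_format, of 1 "\<lambda>_. min s t" "\<lambda>_. max s t"] by blast
    then show "dist (f s) (f t) < e"
      by (cases "s \<le> t") (auto simp: dist_norm norm_minus_commute max_def min_def)
  qed (rule \<delta>)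
qed

lemma abs_cont_on_dominated:
  fixes f :: "real \<Rightarrow> 'a::real_normed_vector" and g :: "real \<Rightarrow> 'b::real_normed_vector"
  assumes f: "abs_cont_on a b f" and L: "L \<ge> 0"
    and dom: "\<And>s t. s \<in> {a..b} \<Longrightarrow> t \<in> {a..b} \<Longrightarrow> norm (g s - g t) \<le> L * norm (f s - f t)"
  shows "abs_cont_on a b g"
  unfolding abs_cont_on_def
proof (intro allI impI)
  fix \<epsilon> :: real assume \<epsilon>: "\<epsilon> > 0"
  then have "\<epsilon> / (L + 1) > 0" using L by simp
  from f[unfolded abs_cont_on_def, rule_format, OF this]
  obtain \<delta> where \<delta>: "\<delta> > 0" and small: "\<forall>(n::nat) u v. (\<forall>i<n. a \<le> u i \<and> u i \<le> v i \<and> v i \<le> b) \<and>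
      (\<forall>i<n. \<forall>j<n. i \<noteq> j \<longrightarrow> v i \<le> u j \<or> v j \<le> u i) \<and> (\<Sum>i<n. v i - u i) < \<delta> \<longrightarrow>
      (\<Sum>i<n. norm (f (v i) - f (u i))) < \<epsilon> / (L + 1)"
    by blast
  show "\<exists>\<delta>>0. \<forall>(n::nat) u v. (\<forall>i<n. a \<le> u i \<and> u i \<le> v i \<and> v i \<le> b) \<and>
      (\<forall>i<n. \<forall>j<n. i \<noteq> j \<longrightarrow> v i \<le> u j \<or> v j \<le> u i) \<and> (\<Sum>i<n. v i - u i) < \<delta> \<longrightarrow>
      (\<Sum>i<n. norm (g (v i) - g (u i))) < \<epsilon>"
  proof (intro exI[of _ \<delta>] conjI allI impI)
    fix n :: nat and u v :: "nat \<Rightarrow> real"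
    assume adm: "(\<forall>i<n. a \<le> u i \<and> u i \<le> v i \<and> v i \<le> b) \<and>
      (\<forall>i<n. \<forall>j<n. i \<noteq> j \<longrightarrow> v i \<le> u j \<or> v j \<le> u i) \<and> (\<Sum>i<n. v i - u i) < \<delta>"
    have "(\<Sum>i<n. norm (g (v i) - g (u i))) \<le> (\<Sum>i<n. L * norm (f (v i) - f (u i)))"
      using adm by (intro sum_mono dom) auto
    also have "\<dots> = L * (\<Sum>i<n. norm (f (v i) - f (u i)))" by (simp add: sum_distrib_left)
    also have "\<dots> \<le> L * (\<epsilon> / (L + 1))" using small[rule_format, OF adm] L by (intro mult_left_mono) auto
    also have "\<dots> < \<epsilon>" using \<epsilon> L by (simp add: field_simps)
    finally show "(\<Sum>i<n. norm (g (v i) - g (u i))) < \<epsilon>" .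
  qed (rule \<delta>)
qed

lemma DERIV_if_quotient_approx:
  assumes "eventually (\<lambda>s. \<bar>(f s - f t) / (s - t) - V s\<bar> \<le> e s) (at t)"
    and "(V \<longlongrightarrow> L) (at t)" and "(e \<longlongrightarrow> 0) (at t)"
  shows "(f has_real_derivative L) (at t)"
proof -
  have "((\<lambda>s. (f s - f t) / (s - t) - V s) \<longlongrightarrow> 0) (at t)"
    by (rule Lim_null_comparison[OF _ assms(3)]) (use assms(1) in simp)
  from tendsto_add[OF this assms(2)] show ?thesis by (simp add: has_field_derivative_iff)
qed

lemma quotient_between:
  fixes d N A C :: real
  assumes "d \<noteq> 0" "d * A \<le> N" "N \<le> d * C"
  shows "\<bar>N / d - C\<bar> \<le> \<bar>A - C\<bar>"
proof (cases "d > 0")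
  case True
  then have "A \<le> N / d" "N / d \<le> C"
    using assms by (simp_all add: pos_le_divide_eq pos_divide_le_eq mult.commute)
  then show ?thesis by arith
next
  case False
  then have "d < 0" using assms(1) by simp
  then have "N / d \<le> A" "C \<le> N / d"
    using assms by (simp_all add: neg_le_divide_eq neg_divide_le_eq mult.commute)
  then show ?thesis by arith
qed

lemma eventually_at_in_Icc:
  fixes t :: real
  assumes "t \<in> {a<..<b}"
  shows "eventually (\<lambda>s. s \<in> {a..b} \<and> s \<noteq> t) (at t)"
  unfolding eventually_at using assms
  by (intro exI[of _ "min (t - a) (b - t)"]) (auto simp: dist_real_def)

section \<open>Polar coordinates of a curve in the cone\<close>

locale polar_curve =
  fixes \<Omega> :: "(real \<times> real) set" and w0 w0d :: "real \<times> real"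
    and x y R \<theta> :: "real \<Rightarrow> real" and a b :: real
  assumes \<Omega>_prop_i: "prop_i \<Omega>" and \<Omega>_prop_star: "prop_star \<Omega>" and \<Omega>_prop_starstar: "prop_starstar \<Omega>"
    and w0: "w0 \<in> frontier \<Omega>" and w0d: "w0d \<in> frontier (antipolar \<Omega>)"
    and ab: "a \<le> b"
    and ac: "abs_cont_on a b (\<lambda>t. (x t, y t))"
    and nonzero: "\<forall>t\<in>{a..b}. (x t, y t) \<noteq> (0, 0)"
    and R_nonneg: "\<forall>t\<in>{a..b}. R t \<ge> 0"
    and \<theta>_hdom: "\<forall>t\<in>{a..b}. \<theta> t \<in> hdom \<Omega> w0"
    and repr: "\<forall>t\<in>{a..b}. x t = R t * hcosh \<Omega> w0 (\<theta> t) \<and> y t = R t * hsinh \<Omega> w0 (\<theta> t)"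
begin

sublocale primal: hyperbolic_domain \<Omega> w0
  using \<Omega>_prop_i \<Omega>_prop_star w0 by unfold_locales

lemma w0d_antipolar: "w0d \<in> antipolar \<Omega>"
  using w0d closed_antipolar frontier_subset_closed by blast

sublocale dual: hyperbolic_domain "antipolar \<Omega>" w0d
  using prop_i_antipolar[OF \<Omega>_prop_i] prop_star_antipolar[OF \<Omega>_prop_i \<Omega>_prop_starstar] w0d w0d_antipolar
  by unfold_locales blast+

definition z :: "real \<Rightarrow> real \<times> real" where
  "z t = (x t, y t)"

definition w :: "real \<Rightarrow> real \<times> real" where
  "w t = hpoint \<Omega> w0 (\<theta> t)"

lemma w_frontier: "t \<in> {a..b} \<Longrightarrow> w t \<in> frontier \<Omega>"
  and hang_w: "t \<in> {a..b} \<Longrightarrow> hang \<Omega> w0 (w t) = \<theta> t"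
  using \<theta>_hdom primal.hpoint_in_frontier primal.hang_hpoint by (simp_all add: w_def)

lemma w_in_\<Omega>: "t \<in> {a..b} \<Longrightarrow> w t \<in> \<Omega>"
  using w_frontier primal.frontier_subset_S by blast

lemma hcosh_hsinh_eq_w: "hcosh \<Omega> w0 (\<theta> t) = fst (w t)" "hsinh \<Omega> w0 (\<theta> t) = snd (w t)"
  by (simp_all add: hcosh_def hsinh_def w_def)

lemma z_eq: "t \<in> {a..b} \<Longrightarrow> z t = R t *\<^sub>R w t"
  using repr by (simp add: z_def hcosh_hsinh_eq_w prod_eq_iff)

lemma R_pos: "t \<in> {a..b} \<Longrightarrow> R t > 0"
  using R_nonneg nonzero z_eq[of t] by (force simp: z_def zero_prod_def less_le)

lemma R_le_mirror_inner:
  assumes s: "s \<in> {a..b}" and g: "g \<in> antipolar \<Omega>"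
  shows "R s \<le> mirror g \<bullet> z s"
proof -
  have "R s * 1 \<le> R s * (mirror g \<bullet> w s)"
    using R_pos[OF s] g w_in_\<Omega>[OF s] by (intro mult_left_mono) (auto simp: mem_antipolar_iff)
  then show ?thesis by (simp add: z_eq[OF s])
qed

text \<open>The radius is the minimum over the antipolar of the pairing with the curve, attained at
  the functionals supporting \<open>\<Omega>\<close> at \<open>w t\<close>.\<close>
lemma R_diff_le:
  assumes s: "s \<in> {a..b}" and t: "t \<in> {a..b}"
    and g: "g \<in> antipolar \<Omega>" and gw: "mirror g \<bullet> w t = 1"
  shows "R s - R t \<le> mirror g \<bullet> (z s - z t)"
  using R_le_mirror_inner[OF s g] gw by (simp add: z_eq[OF t] inner_diff_right)

definition G :: "real \<Rightarrow> real \<times> real" where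
  "G t = (SOME g. g \<in> antipolar \<Omega> \<and> mirror g \<bullet> w t = 1)"

lemma G_supporting:
  assumes "t \<in> {a..b}"
  shows "G t \<in> antipolar \<Omega>" and "mirror (G t) \<bullet> w t = 1"
proof -
  obtain g where "g \<in> antipolar \<Omega>" "mirror g \<bullet> w t = 1"
    using exists_supporting_antipolar[OF \<Omega>_prop_i \<Omega>_prop_star w_frontier[OF assms]] .
  then have "G t \<in> antipolar \<Omega> \<and> mirror (G t) \<bullet> w t = 1"
    unfolding G_def by (intro someI[where P = "\<lambda>g. g \<in> antipolar \<Omega> \<and> mirror g \<bullet> w t = 1"]) blast
  then show "G t \<in> antipolar \<Omega>" "mirror (G t) \<bullet> w t = 1" by auto
qed

lemma continuous_on_z: "continuous_on {a..b} z"
  using abs_cont_on_imp_continuous_on[OF ac] by (simp add: z_def[abs_def])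

lemma bounded_z: obtains M where "M \<ge> 0" "\<And>t. t \<in> {a..b} \<Longrightarrow> norm (z t) \<le> M"
proof -
  have "bounded (z ` {a..b})" by (intro compact_imp_bounded compact_continuous_image continuous_on_z) auto
  then obtain M where M: "\<forall>t\<in>{a..b}. norm (z t) \<le> M" unfolding bounded_iff by blast
  moreover have "M \<ge> 0" using M ab by (meson atLeastAtMost_iff norm_ge_zero order.trans order_refl)
  ultimately show ?thesis using that by blast
qed

text \<open>The curve keeps a fixed distance \<open>\<delta>\<close> from the boundary of the cone, so \<open>\<delta> \<parallel>g\<parallel> \<le> \<langle>g, z t\<rangle> = R t \<le> \<langle>w0d, z t\<rangle>\<close>.\<close>
lemma supporting_norm_bound:
  obtains B where "B \<ge> 0"
    "\<And>t g. t \<in> {a..b} \<Longrightarrow> g \<in> antipolar \<Omega> \<Longrightarrow> mirror g \<bullet> w t = 1 \<Longrightarrow> norm g \<le> B"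
proof -
  have "compact (z ` {a..b})" by (intro compact_continuous_image continuous_on_z) auto
  moreover have "z ` {a..b} \<subseteq> interior (pos_cone \<Omega>)"
    using scaleR_in_interior_pos_cone[OF \<Omega>_prop_i \<Omega>_prop_star w_in_\<Omega> R_pos] by (auto simp: z_eq)
  ultimately obtain \<delta> where \<delta>: "\<delta> > 0" "\<And>t. t \<in> {a..b} \<Longrightarrow> cball (z t) \<delta> \<subseteq> interior (pos_cone \<Omega>)"
    using compact_subset_open_imp_cball_epsilon_subset[OF _ open_interior] by (metis (no_types, lifting) UN_subset_iff imageI)
  obtain M where M: "M \<ge> 0" "\<And>t. t \<in> {a..b} \<Longrightarrow> norm (z t) \<le> M" using bounded_z by blast
  show ?thesis
  proof
    show "norm w0d * M / \<delta> \<ge> 0" using M \<delta> by simp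
    fix t g assume t: "t \<in> {a..b}" and g: "g \<in> antipolar \<Omega>" and gw: "mirror g \<bullet> w t = 1"
    have "cball (z t) \<delta> \<subseteq> closure (pos_cone \<Omega>)"
      using \<delta>(2)[OF t] interior_subset closure_subset by blast
    then have "\<delta> * norm g \<le> mirror g \<bullet> z t" using antipolar_norm_le \<delta>(1) g by simp
    also have "\<dots> = R t" using gw by (simp add: z_eq[OF t])
    also have "\<dots> \<le> mirror w0d \<bullet> z t" using R_le_mirror_inner[OF t w0d_antipolar] .
    also have "\<dots> \<le> norm w0d * M"
      using abs_mirror_inner_le[of w0d "z t"] M(2)[OF t] mult_left_mono[of _ M "norm w0d"] by force
    finally show "norm g \<le> norm w0d * M / \<delta>" using \<delta>(1) by (simp add: field_simps mult.commute)
  qed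
qed

lemma R_lipschitz:
  obtains B where "B \<ge> 0" "\<And>s t. s \<in> {a..b} \<Longrightarrow> t \<in> {a..b} \<Longrightarrow> norm (R s - R t) \<le> B * norm (z s - z t)"
proof -
  obtain B where B: "B \<ge> 0"
    "\<And>t g. t \<in> {a..b} \<Longrightarrow> g \<in> antipolar \<Omega> \<Longrightarrow> mirror g \<bullet> w t = 1 \<Longrightarrow> norm g \<le> B"
    using supporting_norm_bound by blast
  have one_side: "R s - R t \<le> B * norm (z s - z t)" if s: "s \<in> {a..b}" and t: "t \<in> {a..b}" for s t
  proof -
    have "R s - R t \<le> mirror (G t) \<bullet> (z s - z t)" using R_diff_le[OF s t G_supporting[OF t]] .
    also have "\<dots> \<le> norm (G t) * norm (z s - z t)" using abs_mirror_inner_le by (rule abs_le_D1)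
    also have "\<dots> \<le> B * norm (z s - z t)" using B(2)[OF t G_supporting[OF t]] by (simp add: mult_right_mono)
    finally show ?thesis .
  qed
  show ?thesis
  proof
    fix s t assume "s \<in> {a..b}" "t \<in> {a..b}"
    then show "norm (R s - R t) \<le> B * norm (z s - z t)"
      using one_side[of s t] one_side[of t s] by (simp add: norm_minus_commute)
  qed (rule B(1))
qed

lemma abs_cont_on_R: "abs_cont_on a b R"
proof -
  obtain B where "B \<ge> 0" "\<And>s t. s \<in> {a..b} \<Longrightarrow> t \<in> {a..b} \<Longrightarrow> norm (R s - R t) \<le> B * norm (z s - z t)"
    using R_lipschitz by blast
  then show ?thesis by (intro abs_cont_on_dominated[OF ac, of B]) (simp_all add: z_def)
qed

lemma continuous_on_R: "continuous_on {a..b} R"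
  using abs_cont_on_R by (rule abs_cont_on_imp_continuous_on)

lemma R_lower_bound: obtains m where "m > 0" "\<And>s. s \<in> {a..b} \<Longrightarrow> m \<le> R s"
proof -
  obtain t where "t \<in> {a..b}" "\<And>s. s \<in> {a..b} \<Longrightarrow> R t \<le> R s"
    using continuous_attains_inf[OF compact_Icc _ continuous_on_R] ab by auto
  then show ?thesis using that R_pos by blast
qed

lemma det2_w:
  assumes "s \<in> {a..b}" "t \<in> {a..b}"
  shows "det2 (w t) (w s) = det2 (z t) (z s - z t) / (R t * R s)"
  using R_pos[OF assms(1)] R_pos[OF assms(2)] by (simp add: z_eq[OF assms(1)] z_eq[OF assms(2)] det2_diff_right)

lemma theta_lipschitz:
  obtains L where "L \<ge> 0" "\<And>s t. s \<in> {a..b} \<Longrightarrow> t \<in> {a..b} \<Longrightarrow> norm (\<theta> s - \<theta> t) \<le> L * norm (z s - z t)"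
proof -
  obtain M where M: "M \<ge> 0" "\<And>t. t \<in> {a..b} \<Longrightarrow> norm (z t) \<le> M" using bounded_z by blast
  obtain m where m: "m > 0" "\<And>s. s \<in> {a..b} \<Longrightarrow> m \<le> R s" using R_lower_bound by blast
  show ?thesis
  proof
    show "M / m\<^sup>2 \<ge> 0" using M m by simp
    fix s t assume s: "s \<in> {a..b}" and t: "t \<in> {a..b}"
    have "\<bar>\<theta> s - \<theta> t\<bar> \<le> \<bar>det2 (w t) (w s)\<bar>"
      using primal.abs_hang_diff_le[OF w_frontier[OF t] w_frontier[OF s]] hang_w[OF s] hang_w[OF t] by simp
    also have "\<dots> = \<bar>det2 (z t) (z s - z t)\<bar> / (R t * R s)"
      using R_pos[OF s] R_pos[OF t] by (simp add: det2_w[OF s t] abs_div)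
    also have "\<dots> \<le> (M * norm (z s - z t)) / (m * m)"
    proof (rule frac_le)
      show "\<bar>det2 (z t) (z s - z t)\<bar> \<le> M * norm (z s - z t)"
        using abs_det2_le[of "z t" "z s - z t"] mult_right_mono[OF M(2)[OF t] norm_ge_zero[of "z s - z t"]]
        by linarith
      show "m * m \<le> R t * R s" using m(1) m(2)[OF s] m(2)[OF t] by (intro mult_mono) auto
    qed (use M m in auto)
    finally show "norm (\<theta> s - \<theta> t) \<le> M / m\<^sup>2 * norm (z s - z t)"
      by (simp add: power2_eq_square)
  qed
qed

lemma abs_cont_on_theta: "abs_cont_on a b \<theta>"
proof -
  obtain L where "L \<ge> 0" "\<And>s t. s \<in> {a..b} \<Longrightarrow> t \<in> {a..b} \<Longrightarrow> norm (\<theta> s - \<theta> t) \<le> L * norm (z s - z t)"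
    using theta_lipschitz by blast
  then show ?thesis by (intro abs_cont_on_dominated[OF ac, of L]) (simp_all add: z_def)
qed

lemma tendsto_R: "t \<in> {a<..<b} \<Longrightarrow> (R \<longlongrightarrow> R t) (at t)"
  and tendsto_z: "t \<in> {a<..<b} \<Longrightarrow> (z \<longlongrightarrow> z t) (at t)"
  using continuous_on_interior[OF continuous_on_R] continuous_on_interior[OF continuous_on_z]
  by (simp_all add: continuous_at)

lemma tendsto_w:
  assumes t: "t \<in> {a<..<b}"
  shows "(w \<longlongrightarrow> w t) (at t)"
proof -
  have "((\<lambda>s. (1 / R s) *\<^sub>R z s) \<longlongrightarrow> (1 / R t) *\<^sub>R z t) (at t)"
    using tendsto_R[OF t] tendsto_z[OF t] R_pos[of t] t by (intro tendsto_intros) auto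
  moreover have "eventually (\<lambda>s. (1 / R s) *\<^sub>R z s = w s) (at t)"
    using eventually_at_in_Icc[OF t] by eventually_elim (simp add: z_eq R_pos less_imp_neq[symmetric])
  moreover have "(1 / R t) *\<^sub>R z t = w t" using t R_pos[of t] by (simp add: z_eq)
  ultimately show ?thesis using Lim_transform_eventually by fastforce
qed

lemma tendsto_difference_quotient_z:
  assumes "(x has_real_derivative x') (at t)" "(y has_real_derivative y') (at t)"
  shows "((\<lambda>s. (1 / (s - t)) *\<^sub>R (z s - z t)) \<longlongrightarrow> (x', y')) (at t)"
  using tendsto_Pair[OF assms[unfolded has_field_derivative_iff]] by (simp add: z_def)

lemma tendsto_G:
  assumes t: "t \<in> {a<..<b}"
    and unique: "\<And>g. g \<in> antipolar \<Omega> \<Longrightarrow> mirror g \<bullet> w t = 1 \<Longrightarrow> g = g0"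
  shows "(G \<longlongrightarrow> g0) (at t)"
proof -
  obtain B where B: "B \<ge> 0"
    "\<And>t g. t \<in> {a..b} \<Longrightarrow> g \<in> antipolar \<Omega> \<Longrightarrow> mirror g \<bullet> w t = 1 \<Longrightarrow> norm g \<le> B"
    using supporting_norm_bound by blast
  have "t \<in> {a..b}" using t by auto
  then show ?thesis
  proof (rule supporting_selection_tendsto[OF tendsto_w[OF t] w_in_\<Omega> B(1) _ unique])
    show "eventually (\<lambda>s. G s \<in> antipolar \<Omega> \<and> mirror (G s) \<bullet> w s = 1 \<and> norm (G s) \<le> B) (at t)"
      using eventually_at_in_Icc[OF t] by eventually_elim (use G_supporting B(2) in blast)
  qed
qed

lemma R_has_derivative:
  assumes t: "t \<in> {a<..<b}"
    and dx: "(x has_real_derivative x') (at t)" and dy: "(y has_real_derivative y') (at t)"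
    and g0: "g0 \<in> antipolar \<Omega>" "mirror g0 \<bullet> w t = 1"
    and unique: "\<And>g. g \<in> antipolar \<Omega> \<Longrightarrow> mirror g \<bullet> w t = 1 \<Longrightarrow> g = g0"
  shows "(R has_real_derivative mirror g0 \<bullet> (x', y')) (at t)"
proof -
  define \<Delta> where "\<Delta> s = (1 / (s - t)) *\<^sub>R (z s - z t)" for s
  have \<Delta>: "(\<Delta> \<longlongrightarrow> (x', y')) (at t)"
    unfolding \<Delta>_def by (rule tendsto_difference_quotient_z[OF dx dy])
  have tab: "t \<in> {a..b}" using t by auto
  have "((\<lambda>s. norm (G s - g0) * norm (\<Delta> s)) \<longlongrightarrow> norm (g0 - g0) * norm (x', y')) (at t)"
    by (intro tendsto_intros \<Delta> tendsto_G[OF t unique])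
  then have error_to_0: "((\<lambda>s. norm (G s - g0) * norm (\<Delta> s)) \<longlongrightarrow> 0) (at t)" by simp
  \<comment> \<open>the difference quotient of \<open>R\<close> is squeezed between the pairings of \<open>\<Delta> s\<close> with the
    supporting functionals at \<open>w s\<close> and at \<open>w t\<close>\<close>
  have "eventually (\<lambda>s. \<bar>(R s - R t) / (s - t) - mirror g0 \<bullet> \<Delta> s\<bar> \<le> norm (G s - g0) * norm (\<Delta> s)) (at t)"
    using eventually_at_in_Icc[OF t]
  proof eventually_elim
    case (elim s)
    then have s: "s \<in> {a..b}" and st: "s - t \<noteq> 0" by auto
    have z_diff: "z s - z t = (s - t) *\<^sub>R \<Delta> s" using st by (simp add: \<Delta>_def)
    have "R t - R s \<le> mirror (G s) \<bullet> (z t - z s)" using R_diff_le[OF tab s G_supporting[OF s]] .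
    also have "\<dots> = - ((s - t) * (mirror (G s) \<bullet> \<Delta> s))"
      by (metis z_diff inner_minus_right inner_scaleR_right minus_diff_eq)
    finally have "(s - t) * (mirror (G s) \<bullet> \<Delta> s) \<le> R s - R t" by simp
    moreover have "R s - R t \<le> (s - t) * (mirror g0 \<bullet> \<Delta> s)"
      using R_diff_le[OF s tab g0] z_diff by simp
    ultimately have "\<bar>(R s - R t) / (s - t) - mirror g0 \<bullet> \<Delta> s\<bar> \<le> \<bar>mirror (G s) \<bullet> \<Delta> s - mirror g0 \<bullet> \<Delta> s\<bar>"
      using st by (rule quotient_between[rotated])
    also have "\<dots> = \<bar>mirror (G s - g0) \<bullet> \<Delta> s\<bar>" by (simp add: mirror_diff inner_diff_left)
    also have "\<dots> \<le> norm (G s - g0) * norm (\<Delta> s)" by (rule abs_mirror_inner_le)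
    finally show ?case .
  qed
  then show ?thesis
    by (rule DERIV_if_quotient_approx[OF _ _ error_to_0]) (intro tendsto_intros \<Delta>)
qed

lemma theta_has_derivative:
  assumes t: "t \<in> {a<..<b}"
    and dx: "(x has_real_derivative x') (at t)" and dy: "(y has_real_derivative y') (at t)"
    and g0: "g0 \<in> antipolar \<Omega>" "mirror g0 \<bullet> w t = 1"
  shows "(\<theta> has_real_derivative det2 (z t) (x', y') / (R t * R t)) (at t)"
proof -
  define \<Delta> where "\<Delta> s = (1 / (s - t)) *\<^sub>R (z s - z t)" for s
  define V where "V s = det2 (z t) (\<Delta> s) / (R t * R s)" for s
  have tab: "t \<in> {a..b}" using t by auto
  have V: "(V \<longlongrightarrow> det2 (z t) (x', y') / (R t * R t)) (at t)"
    unfolding V_def det2_def \<Delta>_def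
    using tendsto_difference_quotient_z[OF dx dy] tendsto_R[OF t] R_pos[OF tab]
    by (intro tendsto_intros) (auto simp: \<Delta>_def)
  have "((\<lambda>s. \<bar>V s\<bar> * (mirror g0 \<bullet> w s - 1)) \<longlongrightarrow> \<bar>det2 (z t) (x', y') / (R t * R t)\<bar> * (mirror g0 \<bullet> w t - 1)) (at t)"
    by (intro tendsto_intros V tendsto_w[OF t])
  then have error_to_0: "((\<lambda>s. \<bar>V s\<bar> * (mirror g0 \<bullet> w s - 1)) \<longlongrightarrow> 0) (at t)"
    using g0(2) by simp
  have "eventually (\<lambda>s. \<bar>(\<theta> s - \<theta> t) / (s - t) - V s\<bar> \<le> \<bar>V s\<bar> * (mirror g0 \<bullet> w s - 1)) (at t)"
    using eventually_at_in_Icc[OF t]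
  proof eventually_elim
    case (elim s)
    then have s: "s \<in> {a..b}" and st: "s - t \<noteq> 0" by auto
    have "det2 (w t) (w s) = (s - t) * V s"
      using det2_w[OF s tab] st by (simp add: V_def \<Delta>_def)
    then have "\<bar>(\<theta> s - \<theta> t) - (s - t) * V s\<bar> \<le> \<bar>(s - t) * V s\<bar> * (mirror g0 \<bullet> w s - 1)"
      using primal.hang_diff_approx[OF _ w_frontier[OF tab] w_frontier[OF s] g0(2)] g0(1)
        hang_w[OF s] hang_w[OF tab]
      by (simp add: mem_antipolar_iff)
    then have "\<bar>(\<theta> s - \<theta> t) - (s - t) * V s\<bar> / \<bar>s - t\<bar> \<le> \<bar>V s\<bar> * (mirror g0 \<bullet> w s - 1)"
      using st by (simp add: abs_mult divide_le_eq mult_ac)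
    moreover have "(\<theta> s - \<theta> t) / (s - t) - V s = ((\<theta> s - \<theta> t) - (s - t) * V s) / (s - t)"
      using st by (simp add: diff_divide_distrib)
    ultimately show ?case by (simp add: abs_divide)
  qed
  then show ?thesis by (rule DERIV_if_quotient_approx[OF _ V error_to_0])
qed

lemma hdual_singleton_supporting:
  assumes t: "t \<in> {a..b}" and \<eta>: "hdual \<Omega> w0 w0d (\<theta> t) = {\<eta>}"
  shows "hpoint (antipolar \<Omega>) w0d \<eta> \<in> antipolar \<Omega>"
    and "mirror (hpoint (antipolar \<Omega>) w0d \<eta>) \<bullet> w t = 1"
    and "\<And>g. g \<in> antipolar \<Omega> \<Longrightarrow> mirror g \<bullet> w t = 1 \<Longrightarrow> g = hpoint (antipolar \<Omega>) w0d \<eta>"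
proof -
  have hdual_iff: "\<eta>' \<in> hdual \<Omega> w0 w0d (\<theta> t) \<longleftrightarrow> mirror (hpoint (antipolar \<Omega>) w0d \<eta>') \<bullet> w t = 1"
    if "\<eta>' \<in> hdom (antipolar \<Omega>) w0d" for \<eta>'
    using that by (simp add: hdual_def hcosh_def hsinh_def inner_mirror w_def mult.commute)
  have \<eta>_dom: "\<eta> \<in> hdom (antipolar \<Omega>) w0d" using \<eta> by (auto simp: hdual_def)
  show "hpoint (antipolar \<Omega>) w0d \<eta> \<in> antipolar \<Omega>"
    using dual.hpoint_in_frontier[OF \<eta>_dom] dual.frontier_subset_S by blast
  show "mirror (hpoint (antipolar \<Omega>) w0d \<eta>) \<bullet> w t = 1" using hdual_iff[OF \<eta>_dom] \<eta> by simp
  fix g assume g: "g \<in> antipolar \<Omega>" "mirror g \<bullet> w t = 1"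
  have "g \<in> frontier (antipolar \<Omega>)"
    using antipolar_frontier_if_supporting[OF g(1) w_in_\<Omega>[OF t] g(2)] .
  then have "hang (antipolar \<Omega>) w0d g \<in> hdom (antipolar \<Omega>) w0d"
    and g_eq: "hpoint (antipolar \<Omega>) w0d (hang (antipolar \<Omega>) w0d g) = g"
    by (auto simp: hdom_def dual.hpoint_hang)
  then have "hang (antipolar \<Omega>) w0d g \<in> hdual \<Omega> w0 w0d (\<theta> t)" using hdual_iff g(2) by simp
  then show "g = hpoint (antipolar \<Omega>) w0d \<eta>" using \<eta> g_eq by simp
qed

lemma derivative_formulas:
  assumes t: "t \<in> {a<..<b}"
    and dx: "(x has_real_derivative x') (at t)" and dy: "(y has_real_derivative y') (at t)"
    and \<eta>: "hdual \<Omega> w0 w0d (\<theta> t) = {\<eta>}"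
  shows "(R has_real_derivative (x' * hcosh (antipolar \<Omega>) w0d \<eta> - y' * hsinh (antipolar \<Omega>) w0d \<eta>)) (at t)"
    and "(\<theta> has_real_derivative ((y' * hcosh \<Omega> w0 (\<theta> t) - x' * hsinh \<Omega> w0 (\<theta> t)) / R t)) (at t)"
proof -
  have tab: "t \<in> {a..b}" using t by auto
  note supp = hdual_singleton_supporting[OF tab \<eta>]
  show "(R has_real_derivative (x' * hcosh (antipolar \<Omega>) w0d \<eta> - y' * hsinh (antipolar \<Omega>) w0d \<eta>)) (at t)"
    using R_has_derivative[OF t dx dy supp] by (simp add: inner_mirror hcosh_def hsinh_def mult.commute)
  have "det2 (z t) (x', y') / (R t * R t) = (y' * hcosh \<Omega> w0 (\<theta> t) - x' * hsinh \<Omega> w0 (\<theta> t)) / R t"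
    using R_pos[OF tab] by (simp add: z_eq[OF tab] det2_def hcosh_hsinh_eq_w field_simps)
  then show "(\<theta> has_real_derivative ((y' * hcosh \<Omega> w0 (\<theta> t) - x' * hsinh \<Omega> w0 (\<theta> t)) / R t)) (at t)"
    using theta_has_derivative[OF t dx dy supp(1,2)] by simp
qed

end

theorem proposition3:
  fixes \<Omega> :: "(real \<times> real) set"
    and w0 w0d :: "real \<times> real"
    and x y R \<theta> :: "real \<Rightarrow> real"
    and a b :: real
  assumes i: "prop_i \<Omega>" and star: "prop_star \<Omega>" and starstar: "prop_starstar \<Omega>"
    and w0: "w0 \<in> frontier \<Omega>" and w0d: "w0d \<in> frontier (antipolar \<Omega>)"
    and pair: "fst w0d * fst w0 - snd w0d * snd w0 = 1"
    and ab: "a \<le> b"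
    and ac: "abs_cont_on a b (\<lambda>t. (x t, y t))"
    and incone: "\<forall>t\<in>{a..b}. (x t, y t) \<in> pos_cone \<Omega>"
    and nonzero: "\<forall>t\<in>{a..b}. (x t, y t) \<noteq> (0, 0)"
    and Rnn: "\<forall>t\<in>{a..b}. R t \<ge> 0"
    and thdom: "\<forall>t\<in>{a..b}. \<theta> t \<in> hdom \<Omega> w0"
    and repr: "\<forall>t\<in>{a..b}. x t = R t * hcosh \<Omega> w0 (\<theta> t) \<and> y t = R t * hsinh \<Omega> w0 (\<theta> t)"
  shows "abs_cont_on a b R \<and> abs_cont_on a b \<theta> \<and>
    (\<forall>t \<in> {a<..<b}. \<forall>x' y' \<eta>.
       (x has_real_derivative x') (at t) \<and> (y has_real_derivative y') (at t) \<and>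
       hdual \<Omega> w0 w0d (\<theta> t) = {\<eta>} \<longrightarrow>
       (R has_real_derivative
          (x' * hcosh (antipolar \<Omega>) w0d \<eta> - y' * hsinh (antipolar \<Omega>) w0d \<eta>)) (at t) \<and>
       (\<theta> has_real_derivative
          ((y' * hcosh \<Omega> w0 (\<theta> t) - x' * hsinh \<Omega> w0 (\<theta> t)) / R t)) (at t))"
proof -
  \<comment> \<open>\<open>incone\<close> follows from \<open>repr\<close>\<close>
  interpret polar_curve \<Omega> w0 w0d x y R \<theta> a b
    using i star starstar w0 w0d ab ac nonzero Rnn thdom repr by unfold_locales
  show ?thesis using abs_cont_on_R abs_cont_on_theta derivative_formulas by blast
qed

end
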